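(* Let $M(\mathbb{R}^n)$ denote the set of Gaussian mixture distributions on $\mathbb{R}^n$, and let $d$ be the function on $M(\mathbb{R}^n)\times M(\mathbb{R}^n)$ defined in the context below. Then $d$ is a metric on $M(\mathbb{R}^n)$: for all $\mu_0,\mu_1,\mu_2\in M(\mathbb{R}^n)$ we have $d(\mu_0,\mu_1)\ge 0$, $d(\mu_0,\mu_1)=0$ if and only if $\mu_0=\mu_1$, $d(\mu_0,\mu_1)=d(\mu_1,\mu_0)$, and $d(\mu_0,\mu_2)\le d(\mu_0,\mu_1)+d(\mu_1,\mu_2)$.
   Context: A Gaussian distribution on $\mathbb{R}^n$ is the normal law $N(m,\Sigma)$ with mean $m\in\mathbb{R}^n$ and symmetric positive definite covariance $\Sigma$. For two Gaussians $\nu_0=N(m_0,\Sigma_0)$, $\nu_1=N(m_1,\Sigma_1)$, $W_2(\nu_0,\nu_1)$ denotes their 2-Wasserstein distance (quadratic-cost optimal transport distance), which equals $W_2(\nu_0,\nu_1)^2=\|m_0-m_1\|^2+\operatorname{trace}\big(\Sigma_0+\Sigma_1-2(\Sigma_0^{1/2}\Sigma_1\Sigma_0^{1/2})^{1/2}\big)$. A Gaussian mixture distribution is a probability distribution of the form $\mu=\sum_{k=1}^N p^k\nu^k$ with $N$ finite, each $\nu^k$ a Gaussian distribution on $\mathbb{R}^n$, and $p=(p^1,\dots,p^N)$ a probability vector; $M(\mathbb{R}^n)$ is the set of these. Given $\mu_0=\sum_{i=1}^{N_0}p_0^i\nu_0^i$ and $\mu_1=\sum_{j=1}^{N_1}p_1^j\nu_1^j$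 in $M(\mathbb{R}^n)$, let $\Pi(p_0,p_1)$ be the set of nonnegative $N_0\times N_1$ matrices $\pi$ with $\sum_j\pi(i,j)=p_0^i$ and $\sum_i\pi(i,j)=p_1^j$, set $c(i,j)=W_2(\nu_0^i,\nu_1^j)^2$, let $\pi^*$ be a minimizer of $\sum_{i,j}c(i,j)\pi(i,j)$ over $\pi\in\Pi(p_0,p_1)$, and define $d(\mu_0,\mu_1)=\sqrt{\sum_{i,j}c(i,j)\pi^*(i,j)}$. *)

theory Defs
  imports "HOL-Analysis.Analysis" "HOL-Probability.Probability"
begin

definition spd :: "real^'n^'n \<Rightarrow> bool" where
  "spd S \<longleftrightarrow> transpose S = S \<and> (\<forall>x. x \<noteq> 0 \<longrightarrow> x \<bullet> (S *v x) > 0)"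

definition psd :: "real^'n^'n \<Rightarrow> bool" where
  "psd S \<longleftrightarrow> transpose S = S \<and> (\<forall>x. x \<bullet> (S *v x) \<ge> 0)"

definition msqrt :: "real^'n^'n \<Rightarrow> real^'n^'n" where
  "msqrt A = (THE B. psd B \<and> B ** B = A)"

definition gauss_pdf :: "real^'n \<Rightarrow> real^'n^'n \<Rightarrow> real^'n \<Rightarrow> real" where
  "gauss_pdf m S x =
     (2 * pi) powr (- real CARD('n) / 2) * det S powr (-1/2)
     * exp (- ((x - m) \<bullet> (matrix_inv S *v (x - m))) / 2)"

definition gaussian :: "real^'n \<Rightarrow> real^'n^'n \<Rightarrow> (real^'n) measure" where
  "gaussian m S = density lborel (\<lambda>x. ennreal (gauss_pdf m S x))"

text \<open>Squared 2-Wasserstein distance between N(m0,S0) and N(m1,S1), closed form.\<close>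

definition W2sq :: "real^'n \<Rightarrow> real^'n^'n \<Rightarrow> real^'n \<Rightarrow> real^'n^'n \<Rightarrow> real" where
  "W2sq m0 S0 m1 S1 =
     (norm (m0 - m1))\<^sup>2
     + trace (S0 + S1 - 2 *\<^sub>R msqrt (msqrt S0 ** S1 ** msqrt S0))"

text \<open>A Gaussian mixture is represented by a finite list of components
  (weight p^k, mean m^k, covariance S^k).\<close>

type_synonym 'n gmm = "(real \<times> (real^'n) \<times> (real^'n^'n)) list"

definition wt :: "('n::finite) gmm \<Rightarrow> nat \<Rightarrow> real" where "wt r k = fst (r ! k)"
definition mean :: "('n::finite) gmm \<Rightarrow> nat \<Rightarrow> real^'n" where "mean r k = fst (snd (r ! k))"
definition cov :: "('n::finite) gmm \<Rightarrow> nat \<Rightarrow> real^'n^'n" where "cov r k = snd (snd (r ! k))"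

definition valid_gmm :: "('n::finite) gmm \<Rightarrow> bool" where
  "valid_gmm r \<longleftrightarrow> (\<forall>k < length r. wt r k \<ge> 0 \<and> spd (cov r k))
                    \<and> (\<Sum>k < length r. wt r k) = 1"

definition gmm_measure :: "('n::finite) gmm \<Rightarrow> (real^'n) measure" where
  "gmm_measure r = density lborel
     (\<lambda>x. ennreal (\<Sum>k < length r. wt r k * gauss_pdf (mean r k) (cov r k) x))"

definition GMM :: "(real^'n) measure set" where
  "GMM = {gmm_measure r | r. valid_gmm r}"

definition couplings :: "('n::finite) gmm \<Rightarrow> ('n::finite) gmm \<Rightarrow> (nat \<Rightarrow> nat \<Rightarrow> real) set" where
  "couplings r0 r1 = {\<pi>.
     (\<forall>i < length r0. \<forall>j < length r1. \<pi> i j \<ge> 0)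
     \<and> (\<forall>i < length r0. (\<Sum>j < length r1. \<pi> i j) = wt r0 i)
     \<and> (\<forall>j < length r1. (\<Sum>i < length r0. \<pi> i j) = wt r1 j)}"

definition gmm_cost :: "('n::finite) gmm \<Rightarrow> ('n::finite) gmm \<Rightarrow> (nat \<Rightarrow> nat \<Rightarrow> real) \<Rightarrow> real" where
  "gmm_cost r0 r1 \<pi> = (\<Sum>i < length r0. \<Sum>j < length r1.
      W2sq (mean r0 i) (cov r0 i) (mean r1 j) (cov r1 j) * \<pi> i j)"

text \<open>d(mu0,mu1) = sqrt of the optimal value of the discrete transport problem
  (the infimum is attained, so this is the cost of a minimizer pi*).\<close>

definition gmm_dist :: "('n::finite) gmm \<Rightarrow> ('n::finite) gmm \<Rightarrow> real" where
  "gmm_dist r0 r1 = sqrt (Inf (gmm_cost r0 r1 ` couplings r0 r1))"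

end

(*
  By the Bures formula, W2^2 (N(m0, A), N(m1, B)) equals |m0 - m1|^2 plus the
  minimum of the squared Frobenius norm of A^(1/2) - U B^(1/2) over orthogonal U, so W2 is a metric
  on Gaussians. Symmetry of d follows by transposing couplings, the triangle inequality by gluing
  two couplings along the middle mixture and Minkowski's inequality.

  Since distinct Gaussians are at positive W2 distance, d vanishes iff the two mixtures put the same
  total weight on every Gaussian. This is equivalent to equality of the measures by identifiability
  of Gaussian mixtures: along a suitable line the densities become exp (- a s^2 / 2 + b s) with
  pairwise distinct (a, b), and such functions are linearly independent, as one sees by comparing
  their growth at infinity.
*)

theory Submission
  imports Defs "HOL-Real_Asymp.Real_Asymp"
begin

section \<open>Symmetric and positive semidefinite matrices\<close>

lemma matrix_sub_ldistrib: "(A::'a::ring_1^'n^'m) ** (B - C) = A ** B - A ** C"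
  by (simp add: matrix_matrix_mult_def vec_eq_iff algebra_simps sum_subtractf)

lemma matrix_sub_rdistrib: "((B::'a::ring_1^'n^'m) - C) ** A = B ** A - C ** A"
  by (simp add: matrix_matrix_mult_def vec_eq_iff algebra_simps sum_subtractf)

lemma transpose_diff: "transpose ((A::'a::ab_group_add^'n^'m) - B) = transpose A - transpose B"
  by (simp add: transpose_def vec_eq_iff)

lemma trace_transpose: "trace (transpose (M::'a::semiring_1^'n^'n)) = trace M"
  by (simp add: trace_def transpose_def)

lemma trace_scaleR: "trace (c *\<^sub>R (M::real^'n^'n)) = c * trace M"
  by (simp add: trace_def sum_distrib_left)

lemma trace_eq_sum_axis: "trace (M::real^'n^'n) = (\<Sum>i\<in>UNIV. axis i 1 \<bullet> (M *v axis i 1))"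
  unfolding trace_def by (simp add: matrix_vector_mult_basis column_def inner_axis')

lemma matrix_eq_0_if_axis:
  fixes M :: "real^'n^'n"
  assumes "\<And>i. M *v axis i 1 = 0"
  shows "M = 0"
  using assms by (simp add: vec_eq_iff matrix_vector_mult_basis column_def)

lemma matrix_inv:
  fixes A :: "real^'n^'n"
  assumes "invertible A"
  shows matrix_inv_right: "A ** matrix_inv A = mat 1"
    and matrix_inv_left: "matrix_inv A ** A = mat 1"
proof -
  have "\<exists>A'. A ** A' = mat 1 \<and> A' ** A = mat 1" using assms unfolding invertible_def .
  hence "A ** matrix_inv A = mat 1 \<and> matrix_inv A ** A = mat 1"
    unfolding matrix_inv_def by (rule someI_ex)
  thus "A ** matrix_inv A = mat 1" "matrix_inv A ** A = mat 1" by auto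
qed

lemma symmetric_inner_matrix_commute:
  fixes A :: "real^'n^'n"
  assumes "transpose A = A"
  shows "x \<bullet> (A *v y) = y \<bullet> (A *v x)"
proof -
  have "x \<bullet> (A *v y) = (x v* A) \<bullet> y" by (simp add: dot_lmul_matrix)
  also have "x v* A = transpose A *v x" by simp
  finally show ?thesis using assms by (simp add: inner_commute)
qed

lemma symmetric_inner_matrix_adjoint:
  fixes A :: "real^'n^'n"
  assumes "transpose A = A"
  shows "x \<bullet> (A *v y) = (A *v x) \<bullet> y"
  using symmetric_inner_matrix_commute[OF assms] by (simp add: inner_commute)

lemma symmetric_matrixI_inner:
  fixes B :: "real^'n^'n"
  assumes "\<And>x y. x \<bullet> (B *v y) = y \<bullet> (B *v x)"
  shows "transpose B = B"
proof -
  have "transpose B *v x = B *v x" for x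
  proof -
    define d where "d = x v* B - B *v x"
    have "d \<bullet> d = x \<bullet> (B *v d) - (B *v x) \<bullet> d"
      unfolding d_def by (simp add: inner_diff_left dot_lmul_matrix)
    also have "\<dots> = 0" using assms[of x d] by (simp add: inner_commute)
    finally show ?thesis unfolding d_def by simp
  qed
  thus ?thesis by (simp add: matrix_eq)
qed

lemma symmetric_matrix_inv:
  fixes P :: "real^'n^'n"
  assumes "invertible P" "transpose P = P"
  shows "transpose (matrix_inv P) = matrix_inv P"
proof -
  have "transpose (matrix_inv P) ** P = mat 1"
    using arg_cong[OF matrix_inv_right[OF assms(1)], of transpose] assms(2)
    by (simp add: matrix_transpose_mul)
  have "transpose (matrix_inv P) = transpose (matrix_inv P) ** (P ** matrix_inv P)"
    by (simp add: matrix_inv_right[OF assms(1)])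
  also have "\<dots> = (transpose (matrix_inv P) ** P) ** matrix_inv P" by (rule matrix_mul_assoc)
  finally show ?thesis using \<open>transpose (matrix_inv P) ** P = mat 1\<close> by simp
qed

lemma quadratic_form_expand:
  fixes A :: "real^'n^'n"
  assumes "transpose A = A"
  shows "(x + t *\<^sub>R y) \<bullet> (A *v (x + t *\<^sub>R y))
      = x \<bullet> (A *v x) + 2 * t * (y \<bullet> (A *v x)) + t\<^sup>2 * (y \<bullet> (A *v y))"
  using symmetric_inner_matrix_commute[OF assms, of x y]
  by (simp add: algebra_simps power2_eq_square)

lemma linear_coeff_zero_if_quadratic_nonneg:
  fixes a b :: real
  assumes "\<And>t. 2 * t * a + t\<^sup>2 * b \<ge> 0"
  shows "a = 0"
proof (rule ccontr)
  assume "a \<noteq> 0"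
  define c where "c = \<bar>b\<bar> + 1"
  have c: "c > 0" unfolding c_def by simp
  have "2 * (-a/c) * a + (-a/c)\<^sup>2 * b \<ge> 0" by (rule assms)
  hence "a\<^sup>2 * (b - 2*c) / c\<^sup>2 \<ge> 0" using c by (simp add: field_simps power2_eq_square)
  hence "a\<^sup>2 * (b - 2*c) \<ge> 0" using c by (simp add: zero_le_divide_iff)
  moreover have "a\<^sup>2 > 0" using \<open>a \<noteq> 0\<close> by simp
  moreover have "b - 2*c < 0" unfolding c_def by (simp add: abs_if)
  ultimately show False by (simp add: zero_le_mult_iff)
qed

lemma psd_quadratic_form_zeroD:
  fixes P :: "real^'n^'n"
  assumes "psd P" and "x \<bullet> (P *v x) = 0"
  shows "P *v x = 0"
proof -
  have sym: "transpose P = P" using assms(1) unfolding psd_def by simp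
  have "y \<bullet> (P *v x) = 0" for y
  proof (rule linear_coeff_zero_if_quadratic_nonneg[where b = "y \<bullet> (P *v y)"])
    fix t :: real
    have "(x + t *\<^sub>R y) \<bullet> (P *v (x + t *\<^sub>R y)) \<ge> 0" using assms(1) unfolding psd_def by simp
    thus "2 * t * (y \<bullet> (P *v x)) + t\<^sup>2 * (y \<bullet> (P *v y)) \<ge> 0"
      unfolding quadratic_form_expand[OF sym] using assms(2) by simp
  qed
  from this[of "P *v x"] show ?thesis by simp
qed

lemma symmetric_matrix_eq_0_if_quadratic_form_zero:
  fixes D :: "real^'n^'n"
  assumes "transpose D = D" and "\<And>w. w \<bullet> (D *v w) = 0"
  shows "D = 0"
proof -
  have "x \<bullet> (D *v y) = 0" for x y
    using quadratic_form_expand[OF assms(1), of y 1 x] assms(2)[of "y + x"] assms(2)[of x] assms(2)[of y]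
    by simp
  hence "D *v y = 0" for y by (metis inner_eq_zero_iff)
  thus ?thesis by (simp add: matrix_eq)
qed

lemma spd_imp_psd: "spd S \<Longrightarrow> psd S"
  unfolding spd_def psd_def by (metis inner_zero_left less_eq_real_def)

lemma spd_invertible:
  fixes S :: "real^'n^'n"
  assumes "spd S"
  shows "invertible S"
proof -
  have "inj ((*v) S)" unfolding vec.inj_iff_eq_0
    using assms unfolding spd_def by (metis inner_zero_right less_irrefl)
  thus ?thesis using matrix_left_invertible_injective invertible_left_inverse by blast
qed

lemma psd_invertible_imp_spd:
  fixes P :: "real^'n^'n"
  assumes "psd P" "invertible P"
  shows "spd P"
  unfolding spd_def
proof (intro conjI allI impI)
  show "transpose P = P" using assms unfolding psd_def by simp
  fix x :: "real^'n" assume "x \<noteq> 0"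
  hence "P *v x \<noteq> 0" using inj_matrix_vector_mult[OF assms(2)] unfolding vec.inj_iff_eq_0 by blast
  hence "x \<bullet> (P *v x) \<noteq> 0" using psd_quadratic_form_zeroD[OF assms(1)] by blast
  moreover have "x \<bullet> (P *v x) \<ge> 0" using assms(1) unfolding psd_def by simp
  ultimately show "x \<bullet> (P *v x) > 0" by simp
qed

lemma spd_sandwich:
  fixes X B :: "real^'n^'n"
  assumes X: "spd X" and B: "spd B"
  shows "spd (X ** B ** X)"
  unfolding spd_def
proof (intro conjI allI impI)
  have sX: "transpose X = X" and sB: "transpose B = B" using X B unfolding spd_def by auto
  show "transpose (X ** B ** X) = X ** B ** X"
    by (simp add: matrix_transpose_mul sX sB matrix_mul_assoc)
  fix x :: "real^'n" assume "x \<noteq> 0"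
  hence "X *v x \<noteq> 0" using spd_invertible[OF X] inj_matrix_vector_mult unfolding vec.inj_iff_eq_0
    by blast
  hence "(X *v x) \<bullet> (B *v (X *v x)) > 0" using B unfolding spd_def by simp
  also have "(X *v x) \<bullet> (B *v (X *v x)) = x \<bullet> (X *v (B *v (X *v x)))"
    by (rule symmetric_inner_matrix_adjoint[OF sX, symmetric])
  also have "\<dots> = x \<bullet> ((X ** B ** X) *v x)" by (simp add: matrix_vector_mul_assoc matrix_mul_assoc)
  finally show "x \<bullet> ((X ** B ** X) *v x) > 0" .
qed

lemma trace_sandwich_eq_sum_axis:
  fixes B D :: "real^'n^'n"
  assumes "transpose D = D"
  shows "trace (D ** B ** D) = (\<Sum>i\<in>UNIV. (D *v axis i 1) \<bullet> (B *v (D *v axis i 1)))"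
  unfolding trace_eq_sum_axis
  by (simp add: matrix_vector_mul_assoc[symmetric] symmetric_inner_matrix_adjoint[OF assms])

lemma trace_sandwich_psd_nonneg:
  fixes B D :: "real^'n^'n"
  assumes "psd B" "transpose D = D"
  shows "trace (D ** B ** D) \<ge> 0"
  unfolding trace_sandwich_eq_sum_axis[OF assms(2)] using assms(1) unfolding psd_def
  by (simp add: sum_nonneg)

lemma trace_sandwich_psd_eq_0D:
  fixes B D :: "real^'n^'n"
  assumes "psd B" "transpose D = D" "trace (D ** B ** D) = 0"
  shows "B ** D = 0"
proof (rule matrix_eq_0_if_axis)
  fix i
  have "(D *v axis i 1) \<bullet> (B *v (D *v axis i 1)) = 0"
    using assms(3) assms(1) unfolding trace_sandwich_eq_sum_axis[OF assms(2)] psd_def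
    by (subst (asm) sum_nonneg_eq_0_iff) auto
  thus "(B ** D) *v axis i 1 = 0"
    by (simp add: psd_quadratic_form_zeroD[OF assms(1)] matrix_vector_mul_assoc[symmetric])
qed

section \<open>Spectral theorem and matrix square roots\<close>

lemma quadratic_form_max_on_subspace:
  fixes A :: "real^'n^'n"
  assumes S: "subspace S" and ne: "S \<noteq> {0}"
  obtains e where "e \<in> S" "norm e = 1" "\<And>x. x \<in> S \<Longrightarrow> x \<bullet> (A *v x) \<le> (e \<bullet> (A *v e)) * (x \<bullet> x)"
proof -
  let ?K = "S \<inter> sphere 0 1"
  have K1: "compact ?K" using S by (simp add: closed_subspace closed_Int_compact)
  have K2: "?K \<noteq> {}"
  proof -
    obtain y where "y \<in> S" "y \<noteq> 0" using ne S subspace_0 by blast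
    hence "(1/norm y) *\<^sub>R y \<in> ?K" using S by (simp add: subspace_scale)
    thus ?thesis by blast
  qed
  have K3: "continuous_on ?K (\<lambda>x. x \<bullet> (A *v x))"
    by (intro continuous_on_inner continuous_on_id linear_continuous_on matrix_vector_mul_bounded_linear)
  obtain e where e: "e \<in> ?K" and emax: "\<And>y. y \<in> ?K \<Longrightarrow> y \<bullet> (A *v y) \<le> e \<bullet> (A *v e)"
    using continuous_attains_sup[OF K1 K2 K3] by blast
  have "x \<bullet> (A *v x) \<le> (e \<bullet> (A *v e)) * (x \<bullet> x)" if "x \<in> S" for x
  proof (cases "x = 0")
    case False
    have "(1/norm x) *\<^sub>R x \<in> ?K" using that False S by (simp add: subspace_scale)
    hence "((1/norm x) *\<^sub>R x) \<bullet> (A *v ((1/norm x) *\<^sub>R x)) \<le> e \<bullet> (A *v e)" by (rule emax)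
    hence "(1/norm x)\<^sup>2 * (x \<bullet> (A *v x)) \<le> e \<bullet> (A *v e)"
      by (simp add: matrix_vector_mult_scaleR power2_eq_square)
    hence "x \<bullet> (A *v x) \<le> (e \<bullet> (A *v e)) * (norm x)\<^sup>2" using False by (simp add: field_simps)
    thus ?thesis by (simp add: power2_norm_eq_inner)
  qed simp
  thus ?thesis using that e by auto
qed

text \<open>At a maximiser \<open>e\<close> of the quadratic form on the unit sphere of an invariant subspace, the
  nonnegative quadratic \<open>t \<mapsto> l \<parallel>e + t y\<parallel>\<^sup>2 - (e + t y) \<bullet> A (e + t y)\<close> vanishes at \<open>t = 0\<close>, so its
  linear coefficient \<open>2 (l e - A e) \<bullet> y\<close> vanishes for every \<open>y\<close> in the subspace.\<close>

lemma symmetric_matrix_unit_eigenvector: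
  fixes A :: "real^'n^'n"
  assumes sym: "transpose A = A" and S: "subspace S" and inv: "\<And>x. x \<in> S \<Longrightarrow> A *v x \<in> S"
    and ne: "S \<noteq> {0}"
  shows "\<exists>e\<in>S. norm e = 1 \<and> A *v e = (e \<bullet> (A *v e)) *\<^sub>R e"
proof -
  obtain e where e: "e \<in> S" "norm e = 1"
    and emax: "\<And>x. x \<in> S \<Longrightarrow> x \<bullet> (A *v x) \<le> (e \<bullet> (A *v e)) * (x \<bullet> x)"
    using quadratic_form_max_on_subspace[OF S ne] by blast
  define l where "l = e \<bullet> (A *v e)"
  define g where "g x = l * (x \<bullet> x) - x \<bullet> (A *v x)" for x
  have g_nonneg: "g x \<ge> 0" if "x \<in> S" for x using emax[OF that] unfolding g_def l_def by simp
  have "g e = 0" unfolding g_def l_def using e by (simp add: power2_norm_eq_inner[symmetric])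
  have orth: "l * (y \<bullet> e) - y \<bullet> (A *v e) = 0" if "y \<in> S" for y
  proof (rule linear_coeff_zero_if_quadratic_nonneg[where b = "g y"])
    fix t :: real
    have "e + t *\<^sub>R y \<in> S" using S that e by (simp add: subspace_add subspace_scale)
    hence "g (e + t *\<^sub>R y) \<ge> 0" by (rule g_nonneg)
    also have "g (e + t *\<^sub>R y) = g e + 2 * t * (l * (y \<bullet> e) - y \<bullet> (A *v e)) + t\<^sup>2 * g y"
      unfolding g_def quadratic_form_expand[OF sym]
      by (simp add: algebra_simps power2_eq_square inner_commute)
    finally show "2 * t * (l * (y \<bullet> e) - y \<bullet> (A *v e)) + t\<^sup>2 * g y \<ge> 0" using \<open>g e = 0\<close> by simp
  qed
  define y where "y = l *\<^sub>R e - A *v e"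
  have "y \<in> S" unfolding y_def using S e inv by (simp add: subspace_diff subspace_scale)
  hence "l * (y \<bullet> e) - y \<bullet> (A *v e) = 0" by (rule orth)
  hence "y \<bullet> y = 0" unfolding y_def by (simp add: inner_commute algebra_simps)
  thus ?thesis using e unfolding y_def l_def by (intro bexI[of _ e]) auto
qed

lemma subspace_subset_span_insert_orthogonal:
  assumes "subspace S" "e \<in> S" "e \<bullet> e = 1" "S \<inter> {x. e \<bullet> x = 0} \<subseteq> span E"
  shows "S \<subseteq> span (insert e E)"
proof
  fix x assume x: "x \<in> S"
  have "x - (e \<bullet> x) *\<^sub>R e \<in> S \<inter> {x. e \<bullet> x = 0}"
    using x assms(1-3) by (auto simp: subspace_diff subspace_scale inner_diff_right)
  hence "x - (e \<bullet> x) *\<^sub>R e \<in> span (insert e E)" using assms(4) span_mono[of E "insert e E"] by auto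
  moreover have "(e \<bullet> x) *\<^sub>R e \<in> span (insert e E)" by (simp add: span_base span_scale)
  ultimately have "(x - (e \<bullet> x) *\<^sub>R e) + (e \<bullet> x) *\<^sub>R e \<in> span (insert e E)" by (rule span_add)
  thus "x \<in> span (insert e E)" by simp
qed

lemma symmetric_matrix_eigenbasis_subspace:
  fixes A :: "real^'n^'n"
  assumes sym: "transpose A = A"
  shows "subspace S \<Longrightarrow> (\<forall>x\<in>S. A *v x \<in> S) \<Longrightarrow>
    \<exists>E. E \<subseteq> S \<and> finite E \<and> pairwise orthogonal E \<and>
        (\<forall>e\<in>E. norm e = 1 \<and> A *v e = (e \<bullet> (A *v e)) *\<^sub>R e) \<and> span E = S"
proof (induction "dim S" arbitrary: S rule: less_induct)
  case less
  show ?case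
  proof (cases "S = {0}")
    case True
    thus ?thesis by (intro exI[of _ "{}"]) auto
  next
    case False
    obtain e where e: "e \<in> S" "norm e = 1" "A *v e = (e \<bullet> (A *v e)) *\<^sub>R e"
      using symmetric_matrix_unit_eigenvector[OF sym less(2) _ False] less(3) by blast
    have ee: "e \<bullet> e = 1" using e(2) by (simp add: norm_eq_1)
    define S' where "S' = S \<inter> {x. e \<bullet> x = 0}"
    have sub': "subspace S'" unfolding S'_def
      using less(2) by (auto simp: subspace_def inner_add_right)
    have inv': "\<forall>x\<in>S'. A *v x \<in> S'"
    proof
      fix x assume x: "x \<in> S'"
      have "e \<bullet> (A *v x) = x \<bullet> (A *v e)" by (rule symmetric_inner_matrix_commute[OF sym])
      also have "\<dots> = 0" using x unfolding S'_def by (subst e(3)) (simp add: inner_commute)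
      finally show "A *v x \<in> S'" using x less(3) unfolding S'_def by auto
    qed
    have "e \<notin> S'" using ee unfolding S'_def by simp
    hence "S' \<subset> S" using e(1) unfolding S'_def by blast
    moreover have "span S' = S'" "span S = S" using sub' less(2) by simp_all
    ultimately have "dim S' < dim S" by (metis dim_psubset)
    then obtain E' where E': "E' \<subseteq> S'" "finite E'" "pairwise orthogonal E'"
        "\<forall>e\<in>E'. norm e = 1 \<and> A *v e = (e \<bullet> (A *v e)) *\<^sub>R e" "span E' = S'"
      using less(1)[OF _ sub' inv'] by blast
    have "S \<subseteq> span (insert e E')"
      using less(2) e(1) ee E'(5) unfolding S'_def
      by (intro subspace_subset_span_insert_orthogonal) auto
    moreover have "insert e E' \<subseteq> S" using E'(1) e(1) unfolding S'_def by auto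
    moreover have "span (insert e E') \<subseteq> S" using calculation(2) less(2) by (simp add: span_minimal)
    moreover have "pairwise orthogonal (insert e E')"
      using E'(1,3) unfolding pairwise_insert S'_def orthogonal_def by (auto simp: inner_commute)
    ultimately show ?thesis using E'(2,4) e by (intro exI[of _ "insert e E'"]) auto
  qed
qed

lemma symmetric_matrix_eigenbasis:
  fixes A :: "real^'n^'n"
  assumes "transpose A = A"
  obtains E where "finite E" "pairwise orthogonal E"
    "\<And>e. e \<in> E \<Longrightarrow> norm e = 1 \<and> A *v e = (e \<bullet> (A *v e)) *\<^sub>R e" "span E = UNIV"
  using symmetric_matrix_eigenbasis_subspace[OF assms, of UNIV] by auto

lemma psd_square_root_exists:
  fixes A :: "real^'n^'n"
  assumes "psd A"
  shows "\<exists>B. psd B \<and> B ** B = A"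
proof -
  obtain E where E: "finite E" "pairwise orthogonal E"
      "\<And>e. e \<in> E \<Longrightarrow> norm e = 1 \<and> A *v e = (e \<bullet> (A *v e)) *\<^sub>R e" "span E = UNIV"
    using symmetric_matrix_eigenbasis assms unfolding psd_def by metis
  define lam where "lam e = e \<bullet> (A *v e)" for e
  have lam0: "lam e \<ge> 0" for e using assms unfolding psd_def lam_def by simp
  define f where "f x = (\<Sum>e\<in>E. (sqrt (lam e) * (e \<bullet> x)) *\<^sub>R e)" for x
  have "linear f" unfolding f_def
    by (auto simp: linear_iff algebra_simps sum.distrib scaleR_sum_right)
  define B where "B = matrix f"
  have Bv: "B *v x = f x" for x unfolding B_def using matrix_vector_mul(2)[OF \<open>linear f\<close>] by metis
  have orth: "e \<bullet> e' = (if e = e' then 1 else 0)" if "e \<in> E" "e' \<in> E" for e e'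
    using E(2,3) that unfolding pairwise_def orthogonal_def by (auto simp: norm_eq_1)
  have Be: "B *v e' = sqrt (lam e') *\<^sub>R e'" if "e' \<in> E" for e'
  proof -
    have "B *v e' = (\<Sum>e\<in>E. (if e = e' then sqrt (lam e) *\<^sub>R e else 0))"
      unfolding Bv f_def by (rule sum.cong) (auto simp: orth that)
    thus ?thesis using E(1) that by simp
  qed
  have "(B ** B) *v e = A *v e" if "e \<in> E" for e
    using Be[OF that] lam0[of e] E(3)[OF that]
    by (simp add: matrix_vector_mul_assoc[symmetric] matrix_vector_mult_scaleR lam_def)
  hence "(B ** B) *v x = A *v x" for x
    using real_vector.linear_eq_on_span[of "(*v) (B ** B)" "(*v) A" E x] E(4)
    by simp
  hence "B ** B = A" by (simp add: matrix_eq)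
  moreover have inner_B: "x \<bullet> (B *v y) = (\<Sum>e\<in>E. sqrt (lam e) * (e \<bullet> y) * (e \<bullet> x))" for x y
    unfolding Bv f_def by (simp add: inner_sum_right inner_commute)
  have "transpose B = B"
    by (rule symmetric_matrixI_inner) (simp add: inner_B mult.commute mult.left_commute)
  moreover have "x \<bullet> (B *v x) \<ge> 0" for x
    unfolding inner_B by (intro sum_nonneg) (simp add: lam0 mult.assoc)
  ultimately show ?thesis unfolding psd_def by blast
qed

lemma symmetric_matrix_eq_0_if_square_0:
  fixes D :: "real^'n^'n"
  assumes "transpose D = D" "D ** D = 0"
  shows "D = 0"
proof -
  have "(D *v x) \<bullet> (D *v x) = 0" for x
    using assms symmetric_inner_matrix_adjoint[OF assms(1), of x "D *v x"]
    by (simp add: matrix_vector_mul_assoc)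
  thus ?thesis by (simp add: matrix_eq)
qed

lemma psd_square_root_unique:
  fixes B C :: "real^'n^'n"
  assumes B: "psd B" and C: "psd C" and eq: "B ** B = C ** C"
  shows "B = C"
proof -
  define D where "D = B - C"
  have symD: "transpose D = D" using B C unfolding D_def psd_def by (simp add: transpose_diff)
  have "B ** D + D ** C = B ** B - C ** C" unfolding D_def
    by (simp add: matrix_sub_ldistrib matrix_sub_rdistrib)
  hence "D ** (B ** D) + D ** (D ** C) = 0" using eq by (simp add: matrix_add_ldistrib[symmetric])
  hence "trace (D ** (B ** D)) + trace (D ** (D ** C)) = 0" by (metis trace_add trace_0 mat_0)
  moreover have "trace (D ** (D ** C)) = trace (D ** C ** D)" by (rule trace_mul_sym)
  ultimately have "trace (D ** B ** D) + trace (D ** C ** D) = 0" by (simp add: matrix_mul_assoc)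
  hence "trace (D ** B ** D) = 0" "trace (D ** C ** D) = 0"
    using trace_sandwich_psd_nonneg[OF B symD] trace_sandwich_psd_nonneg[OF C symD] by linarith+
  hence "B ** D = 0" "C ** D = 0" using trace_sandwich_psd_eq_0D B C symD by blast+
  hence "D ** D = 0" unfolding D_def by (simp add: matrix_sub_rdistrib)
  thus ?thesis using symmetric_matrix_eq_0_if_square_0[OF symD] unfolding D_def by simp
qed

lemma msqrt_characterization:
  fixes A :: "real^'n^'n"
  assumes "psd A"
  shows psd_msqrt: "psd (msqrt A)" and msqrt_square: "msqrt A ** msqrt A = A"
proof -
  have "\<exists>!B. psd B \<and> B ** B = A"
    using psd_square_root_exists[OF assms] psd_square_root_unique by metis
  hence "psd (msqrt A) \<and> msqrt A ** msqrt A = A" unfolding msqrt_def by (rule theI')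
  thus "psd (msqrt A)" "msqrt A ** msqrt A = A" by auto
qed

lemma msqrt_unique:
  fixes A B :: "real^'n^'n"
  assumes "psd B" "B ** B = A"
  shows "msqrt A = B"
proof -
  have sB: "transpose B = B" using assms(1) unfolding psd_def by simp
  have "x \<bullet> (A *v x) = (B *v x) \<bullet> (B *v x)" for x
    using assms(2) symmetric_inner_matrix_adjoint[OF sB, of x "B *v x"]
    by (metis matrix_vector_mul_assoc)
  moreover have "transpose A = A" using assms(2) sB by (metis matrix_transpose_mul)
  ultimately have "psd A" unfolding psd_def by simp
  thus ?thesis using msqrt_characterization[OF \<open>psd A\<close>] assms psd_square_root_unique by metis
qed

lemma spd_msqrt:
  fixes A :: "real^'n^'n"
  assumes "spd A"
  shows "spd (msqrt A)"
proof (rule psd_invertible_imp_spd)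
  show "psd (msqrt A)" using psd_msqrt[OF spd_imp_psd[OF assms]] .
  have "det (msqrt A) * det (msqrt A) \<noteq> 0"
    using msqrt_square[OF spd_imp_psd[OF assms]] spd_invertible[OF assms]
    by (metis det_mul invertible_det_nz)
  thus "invertible (msqrt A)" by (simp add: invertible_det_nz)
qed

lemma symmetric_msqrt: "spd A \<Longrightarrow> transpose (msqrt A) = msqrt A"
  using spd_msqrt unfolding spd_def by blast

lemma spd_det_pos:
  fixes S :: "real^'n^'n"
  assumes "spd S"
  shows "det S > 0"
proof -
  have "det S = det (msqrt S) * det (msqrt S)"
    using msqrt_square[OF spd_imp_psd[OF assms]] by (metis det_mul)
  moreover have "det (msqrt S) \<noteq> 0" using spd_invertible[OF spd_msqrt[OF assms]]
    by (simp add: invertible_det_nz)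
  ultimately show ?thesis by (simp add: order_less_le)
qed

section \<open>The Wasserstein distance between Gaussians\<close>

lemma inner_matrix_eq_trace: "(M::real^'n^'n) \<bullet> N = trace (transpose M ** N)"
  unfolding inner_vec_def trace_def matrix_matrix_mult_def transpose_def
  by simp (rule sum.swap)

lemma power2_norm_matrix_eq_trace: "(norm (M::real^'n^'n))\<^sup>2 = trace (transpose M ** M)"
  by (simp add: power2_norm_eq_inner inner_matrix_eq_trace)

lemma norm_orthogonal_matrix_mult:
  fixes U Z :: "real^'n^'n"
  assumes "orthogonal_matrix U"
  shows "norm (U ** Z) = norm Z"
proof -
  have "transpose (U ** Z) ** (U ** Z) = transpose Z ** ((transpose U ** U) ** Z)"
    by (simp add: matrix_transpose_mul matrix_mul_assoc)
  hence "(norm (U ** Z))\<^sup>2 = (norm Z)\<^sup>2"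
    using assms unfolding power2_norm_matrix_eq_trace orthogonal_matrix by simp
  thus ?thesis by simp
qed

lemma norm_orthogonal_matrix_vector:
  fixes W :: "real^'n^'n"
  assumes "orthogonal_matrix W"
  shows "norm (W *v x) = norm x"
proof -
  have "orthogonal_transformation ((*v) W)" using assms
    by (simp add: orthogonal_transformation_matrix)
  thus ?thesis by (rule orthogonal_transformation_norm)
qed

text \<open>With \<open>P = Q\<^sup>2\<close>, both traces are sums over the columns \<open>q\<close> of \<open>Q\<close>: of \<open>q \<bullet> W q\<close> and of \<open>q \<bullet> q\<close>;
  compare termwise by Cauchy-Schwarz.\<close>

lemma trace_psd_orthogonal_le:
  fixes P W :: "real^'n^'n"
  assumes P: "psd P" and W: "orthogonal_matrix W"
  shows "trace (P ** W) \<le> trace P"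
proof -
  define Q where "Q = msqrt P"
  have QQ: "Q ** Q = P" and sQ: "transpose Q = Q"
    using msqrt_characterization[OF P] unfolding Q_def psd_def by auto
  let ?q = "\<lambda>i. Q *v axis i 1"
  have "trace (P ** W) = trace (Q ** (Q ** W))" by (simp add: QQ[symmetric] matrix_mul_assoc)
  also have "\<dots> = trace (Q ** W ** Q)" by (rule trace_mul_sym)
  also have "\<dots> = (\<Sum>i\<in>UNIV. ?q i \<bullet> (W *v ?q i))"
    unfolding trace_eq_sum_axis
    by (simp add: matrix_vector_mul_assoc[symmetric] symmetric_inner_matrix_adjoint[OF sQ])
  also have "\<dots> \<le> (\<Sum>i\<in>UNIV. ?q i \<bullet> ?q i)"
  proof (rule sum_mono)
    fix i
    have "?q i \<bullet> (W *v ?q i) \<le> norm (?q i) * norm (W *v ?q i)" by (rule norm_cauchy_schwarz)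
    thus "?q i \<bullet> (W *v ?q i) \<le> ?q i \<bullet> ?q i"
      by (simp add: norm_orthogonal_matrix_vector[OF W] power2_norm_eq_inner[symmetric] power2_eq_square)
  qed
  also have "\<dots> = trace P"
    unfolding trace_eq_sum_axis QQ[symmetric]
    by (simp add: matrix_vector_mul_assoc[symmetric] symmetric_inner_matrix_adjoint[OF sQ])
  finally show ?thesis .
qed

lemma power2_norm_diff_orthogonal_mult:
  fixes X Y V :: "real^'n^'n"
  assumes sX: "transpose X = X" and sY: "transpose Y = Y" and V: "orthogonal_matrix V"
  shows "(norm (X - V ** Y))\<^sup>2 = trace (X ** X) + trace (Y ** Y) - 2 * trace (X ** V ** Y)"
proof -
  have "transpose (X - V ** Y) ** (X - V ** Y) =
        X ** X - X ** V ** Y - Y ** transpose V ** X + Y ** (transpose V ** V) ** Y"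
    by (simp add: transpose_diff matrix_transpose_mul sX sY matrix_sub_ldistrib matrix_sub_rdistrib
        matrix_mul_assoc algebra_simps)
  also have "\<dots> = X ** X - X ** V ** Y - Y ** transpose V ** X + Y ** Y"
    using V by (simp add: orthogonal_matrix)
  finally have e: "transpose (X - V ** Y) ** (X - V ** Y) = \<dots>" .
  have "trace (Y ** transpose V ** X) = trace (transpose (Y ** transpose V ** X))"
    by (simp add: trace_transpose)
  also have "\<dots> = trace (X ** V ** Y)" by (simp add: matrix_transpose_mul sX sY matrix_mul_assoc)
  finally show ?thesis unfolding power2_norm_matrix_eq_trace e by (simp add: trace_add trace_sub)
qed

lemma spd_msqrt_sandwich:
  fixes A B :: "real^'n^'n"
  assumes "spd A" "spd B"
  shows "spd (msqrt (msqrt A ** B ** msqrt A))"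
  using spd_msqrt spd_sandwich[OF spd_msqrt[OF assms(1)] assms(2)] by blast

lemma msqrt_polar_decomposition:
  fixes A B :: "real^'n^'n"
  assumes A: "spd A" and B: "spd B"
  defines "P \<equiv> msqrt (msqrt A ** B ** msqrt A)"
  obtains U where "orthogonal_matrix U"
    "msqrt A ** msqrt B = P ** U" "msqrt B ** msqrt A = transpose U ** P"
proof -
  define X Y where "X = msqrt A" and "Y = msqrt B"
  have sX: "transpose X = X" and sY: "transpose Y = Y"
    unfolding X_def Y_def using symmetric_msqrt A B by auto
  have YY: "Y ** Y = B" unfolding Y_def using msqrt_square spd_imp_psd B by auto
  have XBX: "spd (X ** B ** X)" unfolding X_def using spd_sandwich[OF spd_msqrt[OF A] B] .
  have PP: "P ** P = X ** B ** X" unfolding P_def X_def[symmetric]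
    using msqrt_square[OF spd_imp_psd[OF XBX]] .
  have Ps: "spd P" unfolding P_def using spd_msqrt_sandwich[OF A B] .
  hence sP: "transpose P = P" and Pinv: "invertible P" using spd_invertible unfolding spd_def by auto
  define Pi where "Pi = matrix_inv P"
  have PPi: "P ** Pi = mat 1" and PiP: "Pi ** P = mat 1"
    unfolding Pi_def using matrix_inv[OF Pinv] by auto
  have sPi: "transpose Pi = Pi" unfolding Pi_def using symmetric_matrix_inv[OF Pinv sP] .
  define U where "U = Pi ** (X ** Y)"
  have "U ** transpose U = Pi ** (X ** (Y ** Y) ** X) ** Pi"
    unfolding U_def by (simp add: matrix_transpose_mul sX sY sPi matrix_mul_assoc)
  also have "\<dots> = Pi ** (P ** P) ** Pi" by (simp only: YY PP)
  also have "\<dots> = (Pi ** P) ** (P ** Pi)" by (simp add: matrix_mul_assoc)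
  finally have "U ** transpose U = mat 1" by (simp add: PiP PPi)
  hence "orthogonal_matrix U" by (simp add: orthogonal_matrix matrix_left_right_inverse)
  moreover have XY: "X ** Y = P ** U" unfolding U_def by (simp add: matrix_mul_assoc PPi)
  moreover have "Y ** X = transpose U ** P"
    using arg_cong[OF XY, of transpose] by (simp add: matrix_transpose_mul sX sY sP)
  ultimately show ?thesis using that unfolding X_def Y_def by blast
qed

text \<open>If \<open>A^(1/2) B^(1/2) = P U\<close> is the polar decomposition, the square root of \<open>B^(1/2) A B^(1/2)\<close>
  is the conjugate \<open>U\<^sup>T P U\<close> of \<open>P\<close>.\<close>

lemma trace_msqrt_sandwich_commute:
  fixes A B :: "real^'n^'n"
  assumes A: "spd A" and B: "spd B"
  shows "trace (msqrt (msqrt B ** A ** msqrt B)) = trace (msqrt (msqrt A ** B ** msqrt A))"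
proof -
  define X Y where "X = msqrt A" and "Y = msqrt B"
  define P where "P = msqrt (X ** B ** X)"
  obtain U where U: "orthogonal_matrix U" and XY: "X ** Y = P ** U" and YX: "Y ** X = transpose U ** P"
    using msqrt_polar_decomposition[OF A B] unfolding X_def Y_def P_def by blast
  have XX: "X ** X = A" unfolding X_def using msqrt_square spd_imp_psd A by auto
  have Pp: "psd P" unfolding P_def X_def using spd_imp_psd[OF spd_msqrt_sandwich[OF A B]] .
  have UUt: "U ** transpose U = mat 1" using U by (simp add: orthogonal_matrix_def)
  define R where "R = transpose U ** P ** U"
  have "psd R" unfolding psd_def
  proof (intro conjI allI)
    show "transpose R = R" using Pp unfolding R_def psd_def
      by (simp add: matrix_transpose_mul matrix_mul_assoc)
    fix x :: "real^'n"
    have "x \<bullet> (R *v x) = x \<bullet> (transpose U *v (P *v (U *v x)))"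
      unfolding R_def by (simp add: matrix_vector_mul_assoc matrix_mul_assoc)
    also have "\<dots> = (U *v x) \<bullet> (P *v (U *v x))"
      by (metis dot_lmul_matrix inner_commute transpose_matrix_vector)
    finally have "x \<bullet> (R *v x) = (U *v x) \<bullet> (P *v (U *v x))" .
    thus "0 \<le> x \<bullet> (R *v x)" using Pp unfolding psd_def by simp
  qed
  moreover have "R ** R = Y ** A ** Y"
  proof -
    have "R ** R = transpose U ** P ** (U ** transpose U) ** P ** U"
      unfolding R_def by (simp add: matrix_mul_assoc)
    also have "\<dots> = (Y ** X) ** (X ** Y)" by (simp add: UUt YX XY matrix_mul_assoc)
    finally show ?thesis by (simp add: XX[symmetric] matrix_mul_assoc)
  qed
  ultimately have "msqrt (Y ** A ** Y) = R" by (rule msqrt_unique)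
  hence "trace (msqrt (Y ** A ** Y)) = trace (P ** (U ** transpose U))"
    unfolding R_def by (metis trace_mul_sym matrix_mul_assoc)
  thus ?thesis unfolding X_def Y_def P_def UUt by simp
qed

lemma W2sq_eq_trace:
  "W2sq m0 A m1 B
    = (norm (m0 - m1))\<^sup>2 + (trace A + trace B - 2 * trace (msqrt (msqrt A ** B ** msqrt A)))"
  unfolding W2sq_def by (simp add: trace_add trace_sub trace_scaleR)

lemma power2_norm_msqrt_diff_orthogonal:
  fixes A B U V :: "real^'n^'n"
  assumes A: "spd A" and B: "spd B" and V: "orthogonal_matrix V"
    and YX: "msqrt B ** msqrt A = transpose U ** msqrt (msqrt A ** B ** msqrt A)"
  shows "(norm (msqrt A - V ** msqrt B))\<^sup>2
    = trace A + trace B - 2 * trace (msqrt (msqrt A ** B ** msqrt A) ** (V ** transpose U))"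
proof -
  define X Y P where "X = msqrt A" and "Y = msqrt B" and "P = msqrt (msqrt A ** B ** msqrt A)"
  have sX: "transpose X = X" and sY: "transpose Y = Y"
    unfolding X_def Y_def using symmetric_msqrt A B by auto
  have XX: "X ** X = A" and YY: "Y ** Y = B"
    unfolding X_def Y_def using msqrt_square spd_imp_psd A B by auto
  have "trace (X ** V ** Y) = trace (X ** (V ** Y))" by (simp only: matrix_mul_assoc)
  also have "\<dots> = trace ((V ** Y) ** X)" by (rule trace_mul_sym)
  also have "\<dots> = trace (V ** (Y ** X))" by (simp only: matrix_mul_assoc)
  also have "\<dots> = trace ((V ** transpose U) ** P)"
    using YX unfolding X_def Y_def P_def by (simp only: matrix_mul_assoc)
  also have "\<dots> = trace (P ** (V ** transpose U))" by (rule trace_mul_sym)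
  finally have "trace (X ** V ** Y) = trace (P ** (V ** transpose U))" .
  with power2_norm_diff_orthogonal_mult[OF sX sY V] show ?thesis
    unfolding XX YY by (simp add: X_def Y_def P_def)
qed

lemma W2sq_eq_bures:
  fixes A B :: "real^'n^'n"
  assumes A: "spd A" and B: "spd B"
  obtains U where "orthogonal_matrix U"
    "W2sq m0 A m1 B = (norm (m0 - m1))\<^sup>2 + (norm (msqrt A - U ** msqrt B))\<^sup>2"
proof -
  obtain U where U: "orthogonal_matrix U"
    and YX: "msqrt B ** msqrt A = transpose U ** msqrt (msqrt A ** B ** msqrt A)"
    using msqrt_polar_decomposition[OF A B] by blast
  have "U ** transpose U = mat 1" using U by (simp add: orthogonal_matrix_def)
  hence "(norm (msqrt A - U ** msqrt B))\<^sup>2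
      = trace A + trace B - 2 * trace (msqrt (msqrt A ** B ** msqrt A))"
    using power2_norm_msqrt_diff_orthogonal[OF A B U YX] by simp
  thus ?thesis by (intro that[OF U]) (simp add: W2sq_eq_trace)
qed

lemma W2sq_le_bures:
  fixes A B V :: "real^'n^'n"
  assumes A: "spd A" and B: "spd B" and V: "orthogonal_matrix V"
  shows "W2sq m0 A m1 B \<le> (norm (m0 - m1))\<^sup>2 + (norm (msqrt A - V ** msqrt B))\<^sup>2"
proof -
  obtain U where U: "orthogonal_matrix U"
    and YX: "msqrt B ** msqrt A = transpose U ** msqrt (msqrt A ** B ** msqrt A)"
    using msqrt_polar_decomposition[OF A B] by blast
  have "trace (msqrt (msqrt A ** B ** msqrt A) ** (V ** transpose U))
      \<le> trace (msqrt (msqrt A ** B ** msqrt A))"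
    using V U spd_imp_psd[OF spd_msqrt_sandwich[OF A B]]
    by (intro trace_psd_orthogonal_le) (simp_all add: orthogonal_matrix_mul)
  thus ?thesis using power2_norm_msqrt_diff_orthogonal[OF A B V YX] unfolding W2sq_eq_trace by simp
qed

lemma W2sq_nonneg:
  assumes "spd A" "spd B"
  shows "W2sq m0 A m1 B \<ge> 0"
  by (rule W2sq_eq_bures[OF assms, of m0 m1]) simp

lemma W2sq_commute:
  assumes "spd A" "spd B"
  shows "W2sq m0 A m1 B = W2sq m1 B m0 A"
  unfolding W2sq_eq_trace trace_msqrt_sandwich_commute[OF assms] by (simp add: norm_minus_commute)

lemma W2sq_eq_0_iff:
  fixes A B :: "real^'n^'n"
  assumes A: "spd A" and B: "spd B"
  shows "W2sq m0 A m1 B = 0 \<longleftrightarrow> m0 = m1 \<and> A = B"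
proof
  assume "W2sq m0 A m1 B = 0"
  moreover obtain U where U: "orthogonal_matrix U"
    and "W2sq m0 A m1 B = (norm (m0 - m1))\<^sup>2 + (norm (msqrt A - U ** msqrt B))\<^sup>2"
    by (rule W2sq_eq_bures[OF A B])
  ultimately have "(norm (m0 - m1))\<^sup>2 + (norm (msqrt A - U ** msqrt B))\<^sup>2 = 0" by simp
  hence "m0 = m1" and X: "msqrt A = U ** msqrt B"
    by simp_all
  have "A = transpose (msqrt A) ** msqrt A"
    using msqrt_square[OF spd_imp_psd[OF A]] symmetric_msqrt[OF A] by simp
  also have "\<dots> = msqrt B ** (transpose U ** U) ** msqrt B"
    unfolding X by (simp add: matrix_transpose_mul symmetric_msqrt[OF B] matrix_mul_assoc)
  also have "\<dots> = B" using U msqrt_square[OF spd_imp_psd[OF B]] by (simp add: orthogonal_matrix)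
  finally show "m0 = m1 \<and> A = B" using \<open>m0 = m1\<close> by simp
next
  assume "m0 = m1 \<and> A = B"
  hence "W2sq m0 A m1 B \<le> 0" using W2sq_le_bures[OF A B orthogonal_matrix_id, of m0 m1] by simp
  thus "W2sq m0 A m1 B = 0" using W2sq_nonneg[OF A B, of m0 m1] by simp
qed

text \<open>Composing the optimal orthogonal factors for the two legs gives an admissible (not necessarily
  optimal) factor for the composite, and the Bures form is a Euclidean norm of \<open>(m, A^(1/2))\<close>.\<close>

lemma sqrt_W2sq_triangle:
  fixes A B C :: "real^'n^'n"
  assumes A: "spd A" and B: "spd B" and C: "spd C"
  shows "sqrt (W2sq m0 A m2 C) \<le> sqrt (W2sq m0 A m1 B) + sqrt (W2sq m1 B m2 C)"
proof -
  obtain U1 where U1: "orthogonal_matrix U1"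
    "W2sq m0 A m1 B = (norm (m0 - m1))\<^sup>2 + (norm (msqrt A - U1 ** msqrt B))\<^sup>2"
    by (rule W2sq_eq_bures[OF A B])
  obtain U2 where U2: "orthogonal_matrix U2"
    "W2sq m1 B m2 C = (norm (m1 - m2))\<^sup>2 + (norm (msqrt B - U2 ** msqrt C))\<^sup>2"
    by (rule W2sq_eq_bures[OF B C])
  note le02 = W2sq_le_bures[OF A C orthogonal_matrix_mul[OF U1(1) U2(1)], of m0 m2]
  define p q a b where "p = norm (m0 - m1)" and "q = norm (m1 - m2)"
    and "a = norm (msqrt A - U1 ** msqrt B)" and "b = norm (msqrt B - U2 ** msqrt C)"
  have "norm (m0 - m2) \<le> p + q" unfolding p_def q_def
    by (rule norm_diff_triangle_le[of _ m1]) simp_all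
  hence "(norm (m0 - m2))\<^sup>2 \<le> (p + q)\<^sup>2" by (simp add: power_mono)
  moreover have "msqrt A - (U1 ** U2) ** msqrt C
      = (msqrt A - U1 ** msqrt B) + U1 ** (msqrt B - U2 ** msqrt C)"
    by (simp add: matrix_sub_ldistrib matrix_mul_assoc)
  hence "norm (msqrt A - (U1 ** U2) ** msqrt C) \<le> a + b"
    unfolding a_def b_def by (metis norm_triangle_ineq norm_orthogonal_matrix_mult[OF U1(1)])
  hence "(norm (msqrt A - (U1 ** U2) ** msqrt C))\<^sup>2 \<le> (a + b)\<^sup>2" by (simp add: power_mono)
  ultimately have "W2sq m0 A m2 C \<le> (p + q)\<^sup>2 + (a + b)\<^sup>2" using le02 by linarith
  hence "sqrt (W2sq m0 A m2 C) \<le> sqrt ((p + q)\<^sup>2 + (a + b)\<^sup>2)" by (rule real_sqrt_le_mono)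
  also have "\<dots> \<le> sqrt (p\<^sup>2 + a\<^sup>2) + sqrt (q\<^sup>2 + b\<^sup>2)" by (rule real_sqrt_sum_squares_triangle_ineq)
  finally show ?thesis using U1(2) U2(2) unfolding p_def q_def a_def b_def by simp
qed

section \<open>The discrete transport distance between mixtures\<close>

lemma valid_gmmD:
  assumes "valid_gmm r"
  shows "\<And>k. k < length r \<Longrightarrow> wt r k \<ge> 0" "\<And>k. k < length r \<Longrightarrow> spd (cov r k)"
    "(\<Sum>k < length r. wt r k) = 1"
  using assms unfolding valid_gmm_def by auto

lemma couplingsD:
  assumes "\<pi> \<in> couplings r0 r1"
  shows "\<And>i j. i < length r0 \<Longrightarrow> j < length r1 \<Longrightarrow> \<pi> i j \<ge> 0"
    "\<And>i. i < length r0 \<Longrightarrow> (\<Sum>j<length r1. \<pi> i j) = wt r0 i"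
    "\<And>j. j < length r1 \<Longrightarrow> (\<Sum>i<length r0. \<pi> i j) = wt r1 j"
  using assms unfolding couplings_def by auto

lemma product_coupling:
  assumes "valid_gmm r0" "valid_gmm r1"
  shows "(\<lambda>i j. wt r0 i * wt r1 j) \<in> couplings r0 r1"
  using valid_gmmD[OF assms(1)] valid_gmmD[OF assms(2)]
  unfolding couplings_def by (auto simp: sum_distrib_left[symmetric] sum_distrib_right[symmetric])

lemma W2sq_components_nonneg:
  assumes "valid_gmm r0" "valid_gmm r1" "i < length r0" "j < length r1"
  shows "W2sq (mean r0 i) (cov r0 i) (mean r1 j) (cov r1 j) \<ge> 0"
  using assms valid_gmmD(2) W2sq_nonneg by blast

lemma gmm_cost_nonneg:
  assumes "valid_gmm r0" "valid_gmm r1" "\<pi> \<in> couplings r0 r1"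
  shows "gmm_cost r0 r1 \<pi> \<ge> 0"
  unfolding gmm_cost_def
proof (intro sum_nonneg mult_nonneg_nonneg)
  fix i j assume "i \<in> {..<length r0}" "j \<in> {..<length r1}"
  thus "W2sq (mean r0 i) (cov r0 i) (mean r1 j) (cov r1 j) \<ge> 0" "\<pi> i j \<ge> 0"
    using W2sq_components_nonneg[OF assms(1,2)] couplingsD(1)[OF assms(3)] by auto
qed

lemma bdd_below_gmm_cost: "valid_gmm r0 \<Longrightarrow> valid_gmm r1 \<Longrightarrow> bdd_below (gmm_cost r0 r1 ` couplings r0 r1)"
  using gmm_cost_nonneg by (intro bdd_belowI[of _ 0]) auto

lemma gmm_cost_Inf_le:
  "valid_gmm r0 \<Longrightarrow> valid_gmm r1 \<Longrightarrow> \<pi> \<in> couplings r0 r1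
    \<Longrightarrow> Inf (gmm_cost r0 r1 ` couplings r0 r1) \<le> gmm_cost r0 r1 \<pi>"
  using bdd_below_gmm_cost by (intro cInf_lower) auto

lemma le_Inf_gmm_cost:
  assumes "valid_gmm r0" "valid_gmm r1" "\<And>\<pi>. \<pi> \<in> couplings r0 r1 \<Longrightarrow> c \<le> gmm_cost r0 r1 \<pi>"
  shows "c \<le> Inf (gmm_cost r0 r1 ` couplings r0 r1)"
proof (rule cInf_greatest)
  show "gmm_cost r0 r1 ` couplings r0 r1 \<noteq> {}" using product_coupling[OF assms(1,2)] by blast
qed (use assms(3) in blast)

lemma gmm_cost_Inf_nonneg:
  "valid_gmm r0 \<Longrightarrow> valid_gmm r1 \<Longrightarrow> Inf (gmm_cost r0 r1 ` couplings r0 r1) \<ge> 0"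
  by (rule le_Inf_gmm_cost) (auto intro: gmm_cost_nonneg)

lemma gmm_cost_near_Inf:
  assumes "valid_gmm r0" "valid_gmm r1" "e > 0"
  obtains \<pi> where "\<pi> \<in> couplings r0 r1"
    "sqrt (gmm_cost r0 r1 \<pi>) \<le> sqrt (Inf (gmm_cost r0 r1 ` couplings r0 r1)) + e"
proof -
  let ?I = "Inf (gmm_cost r0 r1 ` couplings r0 r1)"
  have "gmm_cost r0 r1 ` couplings r0 r1 \<noteq> {}" using product_coupling[OF assms(1,2)] by blast
  moreover have "?I < ?I + e\<^sup>2" using assms(3) by simp
  ultimately have "\<exists>\<pi>\<in>couplings r0 r1. gmm_cost r0 r1 \<pi> < ?I + e\<^sup>2"
    using cInf_lessD[of "gmm_cost r0 r1 ` couplings r0 r1" "?I + e\<^sup>2"] by simp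
  then obtain \<pi> where \<pi>: "\<pi> \<in> couplings r0 r1" "gmm_cost r0 r1 \<pi> < ?I + e\<^sup>2" ..
  have "sqrt (gmm_cost r0 r1 \<pi>) \<le> sqrt (?I + e\<^sup>2)" using \<pi>(2) by simp
  also have "\<dots> \<le> sqrt ?I + sqrt (e\<^sup>2)"
    using gmm_cost_Inf_nonneg[OF assms(1,2)] by (intro sqrt_add_le_add_sqrt) auto
  finally show ?thesis using that \<pi>(1) assms(3) by simp
qed

lemma gmm_dist_nonneg: "valid_gmm r0 \<Longrightarrow> valid_gmm r1 \<Longrightarrow> gmm_dist r0 r1 \<ge> 0"
  unfolding gmm_dist_def using gmm_cost_Inf_nonneg by simp

lemma couplings_transpose: "\<pi> \<in> couplings r0 r1 \<Longrightarrow> (\<lambda>i j. \<pi> j i) \<in> couplings r1 r0"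
  unfolding couplings_def by auto

lemma gmm_cost_transpose:
  assumes "valid_gmm r0" "valid_gmm r1"
  shows "gmm_cost r1 r0 (\<lambda>i j. \<pi> j i) = gmm_cost r0 r1 \<pi>"
proof -
  have "gmm_cost r1 r0 (\<lambda>i j. \<pi> j i) = (\<Sum>i<length r1. \<Sum>j<length r0.
      W2sq (mean r0 j) (cov r0 j) (mean r1 i) (cov r1 i) * \<pi> j i)"
    unfolding gmm_cost_def using valid_gmmD(2)[OF assms(1)] valid_gmmD(2)[OF assms(2)]
    by (intro sum.cong refl) (simp add: W2sq_commute)
  also have "\<dots> = gmm_cost r0 r1 \<pi>" unfolding gmm_cost_def by (rule sum.swap)
  finally show ?thesis .
qed

lemma gmm_dist_commute:
  assumes "valid_gmm r0" "valid_gmm r1"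
  shows "gmm_dist r0 r1 = gmm_dist r1 r0"
proof -
  have "gmm_cost r0 r1 ` couplings r0 r1 \<subseteq> gmm_cost r1 r0 ` couplings r1 r0"
    if "valid_gmm r0" "valid_gmm r1" for r0 r1 :: "'n::finite gmm"
    using couplings_transpose gmm_cost_transpose[OF that] by (metis image_eqI image_subsetI)
  hence "gmm_cost r0 r1 ` couplings r0 r1 = gmm_cost r1 r0 ` couplings r1 r0"
    using assms by blast
  thus ?thesis unfolding gmm_dist_def by simp
qed

text \<open>The glued array is \<open>\<pi>\<^sub>1 i j \<pi>\<^sub>2 j k / w j\<close>, with \<open>w\<close> the common marginal.\<close>

lemma glue_couplings:
  fixes \<pi>1 \<pi>2 :: "nat \<Rightarrow> nat \<Rightarrow> real"
  assumes nonneg1: "\<And>i j. i < n0 \<Longrightarrow> j < n1 \<Longrightarrow> \<pi>1 i j \<ge> 0"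
    and nonneg2: "\<And>j k. j < n1 \<Longrightarrow> k < n2 \<Longrightarrow> \<pi>2 j k \<ge> 0"
    and common: "\<And>j. j < n1 \<Longrightarrow> (\<Sum>i<n0. \<pi>1 i j) = (\<Sum>k<n2. \<pi>2 j k)"
  obtains g where "\<And>i j k. i < n0 \<Longrightarrow> j < n1 \<Longrightarrow> k < n2 \<Longrightarrow> g i j k \<ge> 0"
    "\<And>i j. i < n0 \<Longrightarrow> j < n1 \<Longrightarrow> (\<Sum>k<n2. g i j k) = \<pi>1 i j"
    "\<And>j k. j < n1 \<Longrightarrow> k < n2 \<Longrightarrow> (\<Sum>i<n0. g i j k) = \<pi>2 j k"
proof
  define w where "w j = (\<Sum>i<n0. \<pi>1 i j)" for j
  define g where "g i j k = (if w j = 0 then 0 else \<pi>1 i j * \<pi>2 j k / w j)" for i j k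
  have w_nonneg: "w j \<ge> 0" if "j < n1" for j unfolding w_def using nonneg1 that
    by (intro sum_nonneg) auto
  show "g i j k \<ge> 0" if "i < n0" "j < n1" "k < n2" for i j k
    unfolding g_def using nonneg1 nonneg2 w_nonneg that by auto
  have zero1: "\<pi>1 i j = 0" if "i < n0" "j < n1" "w j = 0" for i j
  proof -
    have "\<forall>i\<in>{..<n0}. \<pi>1 i j = 0"
      using that nonneg1 unfolding w_def by (subst sum_nonneg_eq_0_iff[symmetric]) auto
    thus ?thesis using that(1) by simp
  qed
  have zero2: "\<pi>2 j k = 0" if "j < n1" "k < n2" "w j = 0" for j k
  proof -
    have "\<forall>k\<in>{..<n2}. \<pi>2 j k = 0"
      using that nonneg2 common[OF that(1)] unfolding w_def
      by (subst sum_nonneg_eq_0_iff[symmetric]) auto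
    thus ?thesis using that(2) by simp
  qed
  show "(\<Sum>k<n2. g i j k) = \<pi>1 i j" if "i < n0" "j < n1" for i j
  proof (cases "w j = 0")
    case False
    hence "(\<Sum>k<n2. g i j k) = \<pi>1 i j * (\<Sum>k<n2. \<pi>2 j k) / w j"
      unfolding g_def by (simp add: sum_distrib_left sum_divide_distrib)
    thus ?thesis using False common[OF that(2)] unfolding w_def by simp
  qed (simp add: g_def zero1 that)
  show "(\<Sum>i<n0. g i j k) = \<pi>2 j k" if "j < n1" "k < n2" for j k
  proof (cases "w j = 0")
    case False
    hence "(\<Sum>i<n0. g i j k) = (\<Sum>i<n0. \<pi>1 i j) * \<pi>2 j k / w j"
      unfolding g_def by (simp add: sum_distrib_right sum_divide_distrib)
    thus ?thesis using False unfolding w_def by simp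
  qed (simp add: g_def zero2 that)
qed

lemma sqrt_weighted_sum_triangle:
  fixes w a b c :: "'a \<Rightarrow> real"
  assumes w: "\<And>t. t \<in> T \<Longrightarrow> w t \<ge> 0" and a: "\<And>t. t \<in> T \<Longrightarrow> a t \<ge> 0"
    and b: "\<And>t. t \<in> T \<Longrightarrow> b t \<ge> 0" and c: "\<And>t. t \<in> T \<Longrightarrow> sqrt (c t) \<le> sqrt (a t) + sqrt (b t)"
  shows "sqrt (\<Sum>t\<in>T. w t * c t) \<le> sqrt (\<Sum>t\<in>T. w t * a t) + sqrt (\<Sum>t\<in>T. w t * b t)"
proof -
  define x y where "x t = sqrt (w t) * sqrt (a t)" and "y t = sqrt (w t) * sqrt (b t)" for t
  have "c t \<le> (sqrt (a t) + sqrt (b t))\<^sup>2" if "t \<in> T" for t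
  proof (cases "c t \<ge> 0")
    case True
    thus ?thesis using c[OF that] by (metis power_mono real_sqrt_ge_zero real_sqrt_pow2)
  qed (meson order_trans zero_le_power2 nle_le)
  hence "sqrt (\<Sum>t\<in>T. w t * c t) \<le> sqrt (\<Sum>t\<in>T. w t * (sqrt (a t) + sqrt (b t))\<^sup>2)"
    using w by (intro real_sqrt_le_mono sum_mono mult_left_mono) auto
  also have "\<dots> = L2_set (\<lambda>t. x t + y t) T"
    unfolding L2_set_def x_def y_def using w by (intro arg_cong[where f = sqrt] sum.cong)
      (auto simp: power_mult_distrib distrib_left[symmetric])
  also have "\<dots> \<le> L2_set x T + L2_set y T" by (rule L2_set_triangle_ineq)
  also have "\<dots> = sqrt (\<Sum>t\<in>T. w t * a t) + sqrt (\<Sum>t\<in>T. w t * b t)"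
    unfolding L2_set_def x_def y_def using w a b by (simp add: power_mult_distrib)
  finally show ?thesis .
qed

lemma couplings_glue:
  assumes p1: "\<pi>1 \<in> couplings r0 r1" and p2: "\<pi>2 \<in> couplings r1 r2"
  obtains g where "\<And>i j k. i < length r0 \<Longrightarrow> j < length r1 \<Longrightarrow> k < length r2 \<Longrightarrow> g i j k \<ge> 0"
    "\<And>i j. i < length r0 \<Longrightarrow> j < length r1 \<Longrightarrow> (\<Sum>k<length r2. g i j k) = \<pi>1 i j"
    "\<And>j k. j < length r1 \<Longrightarrow> k < length r2 \<Longrightarrow> (\<Sum>i<length r0. g i j k) = \<pi>2 j k"
    "(\<lambda>i k. \<Sum>j<length r1. g i j k) \<in> couplings r0 r2"
proof -
  define n0 n1 n2 where "n0 = length r0" and "n1 = length r1" and "n2 = length r2"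
  note P1 = couplingsD[OF p1, folded n0_def n1_def] and P2 = couplingsD[OF p2, folded n1_def n2_def]
  have "(\<Sum>i<n0. \<pi>1 i j) = (\<Sum>k<n2. \<pi>2 j k)" if "j < n1" for j using P1(3) P2(2) that by simp
  then obtain g where g_nonneg: "\<And>i j k. i < n0 \<Longrightarrow> j < n1 \<Longrightarrow> k < n2 \<Longrightarrow> g i j k \<ge> 0"
    and gk: "\<And>i j. i < n0 \<Longrightarrow> j < n1 \<Longrightarrow> (\<Sum>k<n2. g i j k) = \<pi>1 i j"
    and gi: "\<And>j k. j < n1 \<Longrightarrow> k < n2 \<Longrightarrow> (\<Sum>i<n0. g i j k) = \<pi>2 j k"
    using glue_couplings[of n0 n1 \<pi>1 n2 \<pi>2, OF P1(1) P2(1)] by blast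
  have "(\<lambda>i k. \<Sum>j<n1. g i j k) \<in> couplings r0 r2"
    unfolding couplings_def n0_def[symmetric] n2_def[symmetric]
  proof (intro CollectI conjI allI impI)
    fix i k assume "i < n0" "k < n2"
    thus "(\<Sum>j<n1. g i j k) \<ge> 0" using g_nonneg by (auto intro: sum_nonneg)
  next
    fix i assume "i < n0"
    have "(\<Sum>k<n2. \<Sum>j<n1. g i j k) = (\<Sum>j<n1. \<Sum>k<n2. g i j k)" by (rule sum.swap)
    thus "(\<Sum>k<n2. \<Sum>j<n1. g i j k) = wt r0 i" using gk P1(2) \<open>i < n0\<close> by simp
  next
    fix k assume "k < n2"
    have "(\<Sum>i<n0. \<Sum>j<n1. g i j k) = (\<Sum>j<n1. \<Sum>i<n0. g i j k)" by (rule sum.swap)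
    thus "(\<Sum>i<n0. \<Sum>j<n1. g i j k) = wt r2 k" using gi P2(3) \<open>k < n2\<close> by simp
  qed
  thus ?thesis using that g_nonneg gk gi unfolding n0_def n1_def n2_def by blast
qed

text \<open>On every triple the cost is bounded by \<open>(sqrt c\<^sub>0\<^sub>1 + sqrt c\<^sub>1\<^sub>2)\<^sup>2\<close> by the triangle inequality
  for \<open>W\<^sub>2\<close>, and Minkowski's inequality separates the two legs.\<close>

lemma gmm_cost_glue_le:
  assumes v0: "valid_gmm r0" and v1: "valid_gmm r1" and v2: "valid_gmm r2"
    and g_nonneg: "\<And>i j k. i < length r0 \<Longrightarrow> j < length r1 \<Longrightarrow> k < length r2 \<Longrightarrow> g i j k \<ge> 0"
    and gk: "\<And>i j. i < length r0 \<Longrightarrow> j < length r1 \<Longrightarrow> (\<Sum>k<length r2. g i j k) = \<pi>1 i j"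
    and gi: "\<And>j k. j < length r1 \<Longrightarrow> k < length r2 \<Longrightarrow> (\<Sum>i<length r0. g i j k) = \<pi>2 j k"
  shows "sqrt (gmm_cost r0 r2 (\<lambda>i k. \<Sum>j<length r1. g i j k))
    \<le> sqrt (gmm_cost r0 r1 \<pi>1) + sqrt (gmm_cost r1 r2 \<pi>2)"
proof -
  define n0 n1 n2 where "n0 = length r0" and "n1 = length r1" and "n2 = length r2"
  note g_nonneg = g_nonneg[folded n0_def n1_def n2_def] and gk = gk[folded n0_def n1_def n2_def]
    and gi = gi[folded n0_def n1_def n2_def]
  define \<pi>3 where "\<pi>3 i k = (\<Sum>j<n1. g i j k)" for i k
  define T where "T = {..<n0} \<times> {..<n1} \<times> {..<n2}"
  have sum_T: "(\<Sum>t\<in>T. F t) = (\<Sum>i<n0. \<Sum>j<n1. \<Sum>k<n2. F (i, j, k))" for F :: "_ \<Rightarrow> real"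
    unfolding T_def by (simp add: sum.cartesian_product)
  define G where "G = (\<lambda>(i, j, k). g i j k)"
  define c01 where "c01 = (\<lambda>(i, j, k::nat). W2sq (mean r0 i) (cov r0 i) (mean r1 j) (cov r1 j))"
  define c12 where "c12 = (\<lambda>(i::nat, j, k). W2sq (mean r1 j) (cov r1 j) (mean r2 k) (cov r2 k))"
  define c02 where "c02 = (\<lambda>(i, j::nat, k). W2sq (mean r0 i) (cov r0 i) (mean r2 k) (cov r2 k))"
  have G_nonneg: "G t \<ge> 0" if "t \<in> T" for t using that g_nonneg unfolding T_def G_def by auto
  have c_nonneg: "c01 t \<ge> 0" "c12 t \<ge> 0"
    and c_triangle: "sqrt (c02 t) \<le> sqrt (c01 t) + sqrt (c12 t)" if "t \<in> T" for t
    using that valid_gmmD(2)[OF v0] valid_gmmD(2)[OF v1] valid_gmmD(2)[OF v2]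
    unfolding T_def c01_def c12_def c02_def n0_def n1_def n2_def
    by (auto intro!: W2sq_nonneg sqrt_W2sq_triangle)
  have "gmm_cost r0 r2 \<pi>3 = (\<Sum>i<n0. \<Sum>k<n2. \<Sum>j<n1. g i j k * c02 (i, j, k))"
    unfolding gmm_cost_def \<pi>3_def c02_def n0_def[symmetric] n1_def[symmetric] n2_def[symmetric]
    by (simp add: sum_distrib_left) (simp add: mult.commute)
  also have "\<dots> = (\<Sum>t\<in>T. G t * c02 t)"
    unfolding sum_T G_def by (simp, rule sum.cong[OF refl], rule sum.swap)
  finally have cost02: "gmm_cost r0 r2 \<pi>3 = (\<Sum>t\<in>T. G t * c02 t)" .
  have cost01: "gmm_cost r0 r1 \<pi>1 = (\<Sum>t\<in>T. G t * c01 t)"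
    unfolding sum_T G_def c01_def gmm_cost_def n0_def[symmetric] n1_def[symmetric]
    by (intro sum.cong refl) (simp add: gk flip: sum_distrib_right; simp add: mult.commute)
  have "(\<Sum>t\<in>T. G t * c12 t) = (\<Sum>j<n1. \<Sum>i<n0. \<Sum>k<n2. g i j k * c12 (i, j, k))"
    unfolding sum_T G_def by (simp, rule sum.swap)
  also have "\<dots> = (\<Sum>j<n1. \<Sum>k<n2. \<Sum>i<n0. g i j k * c12 (i, j, k))"
    by (rule sum.cong[OF refl], rule sum.swap)
  also have "\<dots> = gmm_cost r1 r2 \<pi>2"
    unfolding c12_def gmm_cost_def n1_def[symmetric] n2_def[symmetric]
    by (intro sum.cong refl) (simp add: gi flip: sum_distrib_right; simp add: mult.commute)
  finally have cost12: "gmm_cost r1 r2 \<pi>2 = (\<Sum>t\<in>T. G t * c12 t)" ..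
  show ?thesis unfolding \<pi>3_def[symmetric] n1_def[symmetric] cost01 cost02 cost12
    using G_nonneg c_nonneg c_triangle by (rule sqrt_weighted_sum_triangle)
qed

lemma gmm_dist_triangle:
  assumes v0: "valid_gmm r0" and v1: "valid_gmm r1" and v2: "valid_gmm r2"
  shows "gmm_dist r0 r2 \<le> gmm_dist r0 r1 + gmm_dist r1 r2"
proof -
  have "gmm_dist r0 r2 \<le> gmm_dist r0 r1 + gmm_dist r1 r2 + e" if "e > 0" for e :: real
  proof -
    obtain \<pi>1 where \<pi>1: "\<pi>1 \<in> couplings r0 r1" "sqrt (gmm_cost r0 r1 \<pi>1) \<le> gmm_dist r0 r1 + e/2"
      using gmm_cost_near_Inf[OF v0 v1, of "e/2"] \<open>e > 0\<close> unfolding gmm_dist_def by auto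
    obtain \<pi>2 where \<pi>2: "\<pi>2 \<in> couplings r1 r2" "sqrt (gmm_cost r1 r2 \<pi>2) \<le> gmm_dist r1 r2 + e/2"
      using gmm_cost_near_Inf[OF v1 v2, of "e/2"] \<open>e > 0\<close> unfolding gmm_dist_def by auto
    obtain g where g: "\<And>i j k. i < length r0 \<Longrightarrow> j < length r1 \<Longrightarrow> k < length r2 \<Longrightarrow> g i j k \<ge> 0"
      "\<And>i j. i < length r0 \<Longrightarrow> j < length r1 \<Longrightarrow> (\<Sum>k<length r2. g i j k) = \<pi>1 i j"
      "\<And>j k. j < length r1 \<Longrightarrow> k < length r2 \<Longrightarrow> (\<Sum>i<length r0. g i j k) = \<pi>2 j k"
      and \<pi>3: "(\<lambda>i k. \<Sum>j<length r1. g i j k) \<in> couplings r0 r2"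
      using couplings_glue[OF \<pi>1(1) \<pi>2(1)] by blast
    have glue_le: "sqrt (gmm_cost r0 r2 (\<lambda>i k. \<Sum>j<length r1. g i j k))
        \<le> sqrt (gmm_cost r0 r1 \<pi>1) + sqrt (gmm_cost r1 r2 \<pi>2)"
      using g by (rule gmm_cost_glue_le[OF v0 v1 v2])
    have "gmm_dist r0 r2 \<le> sqrt (gmm_cost r0 r2 (\<lambda>i k. \<Sum>j<length r1. g i j k))"
      unfolding gmm_dist_def using gmm_cost_Inf_le[OF v0 v2 \<pi>3] by simp
    thus ?thesis using \<pi>1(2) \<pi>2(2) glue_le by linarith
  qed
  thus ?thesis by (rule field_le_epsilon)
qed

section \<open>Linear independence of Gaussian densities\<close>

text \<open>If \<open>i\<^sub>0\<close> has the slowest-decaying term (smallest \<open>a\<close>, then largest \<open>b\<close>), dividing by that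
  term and letting \<open>s \<rightarrow> \<infinity>\<close> leaves only its coefficient.\<close>

lemma exp_quadratic_dominant_coeff_eq_0:
  fixes a b c :: "'i \<Rightarrow> real"
  assumes "finite I" "i0 \<in> I"
    and dominant: "\<And>i. i \<in> I \<Longrightarrow> i \<noteq> i0 \<Longrightarrow> a i > a i0 \<or> (a i = a i0 \<and> b i < b i0)"
    and zero: "\<And>s. (\<Sum>i\<in>I. c i * exp (- a i * s\<^sup>2 / 2 + b i * s)) = 0"
  shows "c i0 = 0"
proof -
  define g where "g s = (\<Sum>i\<in>I. c i * exp (- (a i - a i0) * s\<^sup>2 / 2 + (b i - b i0) * s))" for s
  have "g s = exp (a i0 * s\<^sup>2 / 2 - b i0 * s) * (\<Sum>i\<in>I. c i * exp (- a i * s\<^sup>2 / 2 + b i * s))" for s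
    unfolding g_def sum_distrib_left
    by (intro sum.cong refl) (auto simp: exp_add[symmetric] field_simps)
  hence "g = (\<lambda>s. 0)" using zero by (simp add: fun_eq_iff)
  moreover have "(g \<longlongrightarrow> (\<Sum>i\<in>I. if i = i0 then c i else 0)) at_top"
    unfolding g_def
  proof (intro tendsto_sum)
    fix i assume "i \<in> I"
    show "((\<lambda>s. c i * exp (- (a i - a i0) * s\<^sup>2 / 2 + (b i - b i0) * s))
        \<longlongrightarrow> (if i = i0 then c i else 0)) at_top"
    proof (cases "i = i0")
      case False
      hence "a i - a i0 > 0 \<or> (a i - a i0 = 0 \<and> b i - b i0 < 0)" using dominant[OF \<open>i \<in> I\<close>] by auto
      hence "((\<lambda>s. exp (- (a i - a i0) * s\<^sup>2 / 2 + (b i - b i0) * s)) \<longlongrightarrow> 0) at_top"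
        by (elim disjE conjE) (real_asymp, simp, real_asymp)
      thus ?thesis using False by (auto intro: tendsto_mult_right_zero)
    qed simp
  qed
  ultimately show ?thesis using assms(1,2) by (simp add: LIMSEQ_const_iff tendsto_const_iff)
qed

lemma exp_quadratic_independent:
  fixes a b c :: "'i \<Rightarrow> real"
  assumes "finite I" "inj_on (\<lambda>i. (a i, b i)) I"
    and "\<And>s. (\<Sum>i\<in>I. c i * exp (- a i * s\<^sup>2 / 2 + b i * s)) = 0"
  shows "\<forall>i\<in>I. c i = 0"
  using assms
proof (induction I rule: finite_psubset_induct)
  case (psubset I)
  show ?case
  proof (cases "I = {}")
    case False
    define a0 where "a0 = Min (a ` I)"
    define b0 where "b0 = Max (b ` {i\<in>I. a i = a0})"
    have "a0 \<in> a ` I" unfolding a0_def using psubset.hyps False by simp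
    hence "b0 \<in> b ` {i\<in>I. a i = a0}" unfolding b0_def using psubset.hyps by (intro Max_in) auto
    then obtain i0 where i0: "i0 \<in> I" "a i0 = a0" "b i0 = b0" by auto
    have "a i > a i0 \<or> (a i = a i0 \<and> b i < b i0)" if "i \<in> I" "i \<noteq> i0" for i
    proof -
      have "a i \<ge> a0" unfolding a0_def using psubset.hyps that(1) by simp
      moreover have "b i \<le> b0" if "a i = a0"
        unfolding b0_def using psubset.hyps \<open>i \<in> I\<close> that by (intro Max_ge) auto
      moreover have "(a i, b i) \<noteq> (a i0, b i0)" using psubset.prems(1) that i0(1)
        by (auto dest: inj_onD)
      ultimately show ?thesis using i0 by force
    qed
    hence c0: "c i0 = 0"
      using exp_quadratic_dominant_coeff_eq_0[OF psubset.hyps i0(1)] psubset.prems(2) by blast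
    have "\<forall>i\<in>I - {i0}. c i = 0"
    proof (rule psubset.IH)
      show "I - {i0} \<subset> I" using i0(1) by blast
      show "inj_on (\<lambda>i. (a i, b i)) (I - {i0})" using psubset.prems(1) by (rule inj_on_subset) blast
      show "(\<Sum>i\<in>I - {i0}. c i * exp (- a i * s\<^sup>2 / 2 + b i * s)) = 0" for s
        using psubset.prems(2)[of s] c0 by (simp add: sum_diff1 psubset.hyps)
    qed
    thus ?thesis using c0 by blast
  qed simp
qed

lemma finite_common_zeros_on_line:
  fixes D :: "real^'n^'n"
  assumes "(v + t *\<^sub>R u) \<bullet> (D *v (v + t *\<^sub>R u)) \<noteq> 0 \<or> h \<bullet> (v + t *\<^sub>R u) \<noteq> 0"
  shows "finite {s. (v + s *\<^sub>R u) \<bullet> (D *v (v + s *\<^sub>R u)) = 0 \<and> h \<bullet> (v + s *\<^sub>R u) = 0}"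
proof -
  define p where "p = [:v \<bullet> (D *v v), u \<bullet> (D *v v) + v \<bullet> (D *v u), u \<bullet> (D *v u):]"
  define q where "q = [:h \<bullet> v, h \<bullet> u:]"
  have pq: "(v + s *\<^sub>R u) \<bullet> (D *v (v + s *\<^sub>R u)) = poly p s" "h \<bullet> (v + s *\<^sub>R u) = poly q s" for s
    unfolding p_def q_def by (simp_all add: algebra_simps)
  have "p \<noteq> 0 \<or> q \<noteq> 0" using assms unfolding pq by auto
  hence "finite {s. poly p s = 0} \<or> finite {s. poly q s = 0}" using poly_roots_finite by blast
  thus ?thesis unfolding pq by (auto elim: finite_subset[rotated])
qed

text \<open>On the line through a good vector for all but one pair and a good vector for the remaining
  one, each pair fails only at finitely many points.\<close>

lemma exists_separating_vector:
  fixes F :: "((real^'n^'n) \<times> (real^'n)) set"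
  assumes "finite F" "\<And>D h. (D, h) \<in> F \<Longrightarrow> transpose D = D \<and> (D \<noteq> 0 \<or> h \<noteq> 0)"
  shows "\<exists>v. \<forall>(D, h)\<in>F. v \<bullet> (D *v v) \<noteq> 0 \<or> h \<bullet> v \<noteq> 0"
  using assms
proof (induction F rule: finite_induct)
  case (insert Dh F)
  obtain D h where Dh: "Dh = (D, h)" by (cases Dh)
  obtain v where v: "\<forall>(D, h)\<in>F. v \<bullet> (D *v v) \<noteq> 0 \<or> h \<bullet> v \<noteq> 0"
    using insert.IH insert.prems by blast
  have "transpose D = D" "D \<noteq> 0 \<or> h \<noteq> 0" using insert.prems[of D h] Dh by auto
  then obtain w where w: "w \<bullet> (D *v w) \<noteq> 0 \<or> h \<bullet> w \<noteq> 0"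
    using symmetric_matrix_eq_0_if_quadratic_form_zero by (metis inner_eq_zero_iff)
  define bad where "bad = (\<lambda>(D', h'). {s. (v + s *\<^sub>R (w - v)) \<bullet> (D' *v (v + s *\<^sub>R (w - v))) = 0
    \<and> h' \<bullet> (v + s *\<^sub>R (w - v)) = 0})"
  have "finite (bad Dh')" if "Dh' \<in> insert Dh F" for Dh'
  proof (cases "Dh' = Dh")
    case True
    have "finite (bad (D, h))" unfolding bad_def case_prod_conv
      by (rule finite_common_zeros_on_line[where t = 1]) (use w in simp)
    thus ?thesis using True Dh by simp
  next
    case False
    obtain D' h' where D'h': "Dh' = (D', h')" by (cases Dh')
    hence "(D', h') \<in> F" using False that by auto
    have "finite (bad (D', h'))" unfolding bad_def case_prod_conv
      by (rule finite_common_zeros_on_line[where t = 0]) (use v \<open>(D', h') \<in> F\<close> in auto)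
    thus ?thesis using D'h' by simp
  qed
  hence "finite (\<Union>(bad ` insert Dh F))" using insert.hyps(1) by blast
  then obtain s where "s \<notin> \<Union>(bad ` insert Dh F)"
    using ex_new_if_finite[OF infinite_UNIV_char_0] by blast
  thus ?case unfolding bad_def by (intro exI[of _ "v + s *\<^sub>R (w - v)"]) auto
qed simp

lemma gauss_pdf_on_line:
  fixes S :: "real^'n^'n"
  assumes "spd S"
  defines "Q \<equiv> matrix_inv S"
  shows "gauss_pdf m S (s *\<^sub>R v) =
    ((2 * pi) powr (- real CARD('n) / 2) * det S powr (-1/2) * exp (- (m \<bullet> (Q *v m)) / 2))
    * exp (- (v \<bullet> (Q *v v)) * s\<^sup>2 / 2 + (v \<bullet> (Q *v m)) * s)"
proof -
  have sQ: "transpose Q = Q"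
    unfolding Q_def using symmetric_matrix_inv[OF spd_invertible[OF assms(1)]] assms(1)
    unfolding spd_def by simp
  have "(s *\<^sub>R v - m) \<bullet> (Q *v (s *\<^sub>R v - m))
      = s\<^sup>2 * (v \<bullet> (Q *v v)) - 2 * s * (v \<bullet> (Q *v m)) + m \<bullet> (Q *v m)"
    using symmetric_inner_matrix_commute[OF sQ, of m v]
    by (simp add: algebra_simps power2_eq_square)
  hence "exp (- ((s *\<^sub>R v - m) \<bullet> (Q *v (s *\<^sub>R v - m))) / 2)
      = exp (- (m \<bullet> (Q *v m)) / 2) * exp (- (v \<bullet> (Q *v v)) * s\<^sup>2 / 2 + (v \<bullet> (Q *v m)) * s)"
    by (simp add: exp_add[symmetric] field_simps)
  thus ?thesis unfolding gauss_pdf_def Q_def by (simp add: mult.assoc)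
qed

lemma spd_matrix_inv_mult_eqD:
  fixes S S' :: "real^'n^'n"
  assumes "spd S" "spd S'" "matrix_inv S = matrix_inv S'" "matrix_inv S *v m = matrix_inv S' *v m'"
  shows "S = S'" "m = m'"
proof -
  note inv = matrix_inv[OF spd_invertible[OF assms(1)]] matrix_inv[OF spd_invertible[OF assms(2)]]
  have "S = S ** (matrix_inv S' ** S')" using inv(4) by simp
  also have "\<dots> = (S ** matrix_inv S) ** S'" using assms(3) by (simp add: matrix_mul_assoc)
  finally show "S = S'" using inv(1) by simp
  have "m = S *v (matrix_inv S *v m)" by (simp add: matrix_vector_mul_assoc inv(1))
  also have "\<dots> = S' *v (matrix_inv S' *v m')" using \<open>S = S'\<close> assms(4) by simp
  finally show "m = m'" by (simp add: matrix_vector_mul_assoc inv(3))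
qed

text \<open>Restricted to a line \<open>s v\<close>, the density of \<open>N(m, S)\<close> is \<open>C exp (- a s\<^sup>2 / 2 + b s)\<close> with
  \<open>a = v \<bullet> S\<^sup>-\<^sup>1 v\<close>, \<open>b = v \<bullet> S\<^sup>-\<^sup>1 m\<close>. Distinct Gaussians have distinct \<open>(S\<^sup>-\<^sup>1, S\<^sup>-\<^sup>1 m)\<close>, and a
  separating vector \<open>v\<close> keeps the pairs \<open>(a, b)\<close> distinct.\<close>

lemma gaussian_densities_independent:
  fixes \<Theta> :: "((real^'n) \<times> (real^'n^'n)) set"
  assumes fin: "finite \<Theta>" and spd: "\<And>t. t \<in> \<Theta> \<Longrightarrow> spd (snd t)"
    and zero: "\<And>x. (\<Sum>t\<in>\<Theta>. c t * gauss_pdf (fst t) (snd t) x) = 0"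
  shows "\<forall>t\<in>\<Theta>. c t = 0"
proof -
  define Q where "Q t = matrix_inv (snd t)" for t :: "(real^'n) \<times> (real^'n^'n)"
  define h where "h t = Q t *v fst t" for t
  have sQ: "transpose (Q t) = Q t" if "t \<in> \<Theta>" for t
    unfolding Q_def using symmetric_matrix_inv[OF spd_invertible[OF spd[OF that]]] spd[OF that]
    unfolding spd_def by simp
  have inj: "inj_on (\<lambda>t. (Q t, h t)) \<Theta>"
  proof (rule inj_onI)
    fix t t' assume t: "t \<in> \<Theta>" and t': "t' \<in> \<Theta>" and "(Q t, h t) = (Q t', h t')"
    hence "matrix_inv (snd t) = matrix_inv (snd t')"
      "matrix_inv (snd t) *v fst t = matrix_inv (snd t') *v fst t'"
      unfolding Q_def h_def by auto
    from spd_matrix_inv_mult_eqD[OF spd[OF t] spd[OF t'] this] show "t = t'"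
      by (simp add: prod_eq_iff)
  qed
  define F where "F = (\<lambda>(t, t'). (Q t - Q t', h t - h t')) ` {p \<in> \<Theta> \<times> \<Theta>. fst p \<noteq> snd p}"
  have "finite F" unfolding F_def using fin by simp
  moreover have "transpose D = D \<and> (D \<noteq> 0 \<or> k \<noteq> 0)" if "(D, k) \<in> F" for D k
    using that sQ inj unfolding F_def by (auto simp: transpose_diff dest: inj_onD)
  ultimately obtain v where v: "\<forall>(D, k)\<in>F. v \<bullet> (D *v v) \<noteq> 0 \<or> k \<bullet> v \<noteq> 0"
    using exists_separating_vector by blast
  define a b where "a t = v \<bullet> (Q t *v v)" and "b t = v \<bullet> (Q t *v fst t)" for t
  define C where "C t = (2 * pi) powr (- real CARD('n) / 2) * det (snd t) powr (-1/2)
      * exp (- (fst t \<bullet> (Q t *v fst t)) / 2)" for t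
  have "inj_on (\<lambda>t. (a t, b t)) \<Theta>"
  proof (rule inj_onI, rule ccontr)
    fix t t' assume "t \<in> \<Theta>" "t' \<in> \<Theta>" "(a t, b t) = (a t', b t')" "t \<noteq> t'"
    moreover have "(Q t - Q t', h t - h t') \<in> F" unfolding F_def using calculation by force
    ultimately show False using v unfolding a_def b_def h_def
      by (auto simp: matrix_vector_mult_diff_rdistrib inner_diff_right inner_diff_left inner_commute)
  qed
  moreover have "(\<Sum>t\<in>\<Theta>. (c t * C t) * exp (- a t * s\<^sup>2 / 2 + b t * s)) = 0" for s
    using zero[of "s *\<^sub>R v"] spd unfolding a_def b_def C_def Q_def
    by (simp add: gauss_pdf_on_line mult.assoc)
  ultimately have "\<forall>t\<in>\<Theta>. c t * C t = 0" using fin by (intro exp_quadratic_independent) auto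
  moreover have "C t > 0" if "t \<in> \<Theta>" for t
    unfolding C_def using spd_det_pos[OF spd[OF that]] by simp
  ultimately show ?thesis by force
qed

section \<open>Mixtures with equal regrouped weights\<close>

text \<open>A mixture may list the same Gaussian several times; only the total weight it puts on each
  Gaussian matters.\<close>

definition gmm_component :: "('n::finite) gmm \<Rightarrow> nat \<Rightarrow> (real^'n) \<times> (real^'n^'n)" where
  "gmm_component r i = (mean r i, cov r i)"

definition gmm_component_mass :: "('n::finite) gmm \<Rightarrow> (real^'n) \<times> (real^'n^'n) \<Rightarrow> real" where
  "gmm_component_mass r \<theta> = (\<Sum>i<length r. if gmm_component r i = \<theta> then wt r i else 0)"

definition gmm_density :: "('n::finite) gmm \<Rightarrow> real^'n \<Rightarrow> real" where
  "gmm_density r x = (\<Sum>k<length r. wt r k * gauss_pdf (mean r k) (cov r k) x)"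

lemma sum_if_gmm_component:
  "(\<Sum>i<length r. if gmm_component r i = \<theta> then wt r i * c else 0) = gmm_component_mass r \<theta> * c"
  unfolding gmm_component_mass_def sum_distrib_right by (intro sum.cong) auto

lemma gmm_component_mass_nonneg: "valid_gmm r \<Longrightarrow> gmm_component_mass r \<theta> \<ge> 0"
  unfolding gmm_component_mass_def using valid_gmmD(1) by (auto intro!: sum_nonneg)

lemma wt_le_gmm_component_mass:
  assumes "valid_gmm r" "i < length r"
  shows "wt r i \<le> gmm_component_mass r (gmm_component r i)"
proof -
  have "(if gmm_component r i = gmm_component r i then wt r i else 0)
      \<le> gmm_component_mass r (gmm_component r i)"
    unfolding gmm_component_mass_def using valid_gmmD(1)[OF assms(1)] assms(2)
    by (intro member_le_sum) auto
  thus ?thesis by simp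
qed

lemma gmm_component_mass_eq_0:
  "\<theta> \<notin> gmm_component r ` {..<length r} \<Longrightarrow> gmm_component_mass r \<theta> = 0"
  unfolding gmm_component_mass_def by (intro sum.neutral) auto

lemma gmm_density_regroup:
  assumes "finite \<Theta>" "gmm_component r ` {..<length r} \<subseteq> \<Theta>"
  shows "gmm_density r x = (\<Sum>\<theta>\<in>\<Theta>. gmm_component_mass r \<theta> * gauss_pdf (fst \<theta>) (snd \<theta>) x)"
proof -
  have "(\<Sum>\<theta>\<in>\<Theta>. gmm_component_mass r \<theta> * gauss_pdf (fst \<theta>) (snd \<theta>) x)
      = (\<Sum>i<length r. \<Sum>\<theta>\<in>\<Theta>. if gmm_component r i = \<theta> then wt r i * gauss_pdf (fst \<theta>) (snd \<theta>) x else 0)"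
    unfolding gmm_component_mass_def sum_distrib_right by (subst sum.swap) (auto intro!: sum.cong)
  also have "\<dots> = gmm_density r x"
    unfolding gmm_density_def using assms by (intro sum.cong refl) (auto simp: gmm_component_def)
  finally show ?thesis ..
qed

lemma continuous_on_gmm_density: "continuous_on UNIV (gmm_density r)"
proof -
  have "continuous_on UNIV (\<lambda>x. A *v (x - m))" for A :: "real^'n^'n" and m
    unfolding matrix_vector_mult_diff_distrib
    by (intro continuous_on_diff matrix_vector_mult_linear_continuous_on continuous_on_const)
  thus ?thesis unfolding gmm_density_def gauss_pdf_def by (intro continuous_intros) auto
qed

lemma gmm_density_nonneg: "valid_gmm r \<Longrightarrow> gmm_density r x \<ge> 0"
  unfolding gmm_density_def gauss_pdf_def valid_gmm_def by (auto intro!: sum_nonneg)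

lemma continuous_AE_lborel_eq:
  fixes f g :: "'a::euclidean_space \<Rightarrow> real"
  assumes "continuous_on UNIV f" "continuous_on UNIV g" and ae: "AE x in lborel. f x = g x"
  shows "f = g"
proof (rule ccontr)
  assume "f \<noteq> g"
  then obtain x where "f x \<noteq> g x" by auto
  define A where "A = (\<lambda>x. f x - g x) -` (- {0})"
  have "open A" unfolding A_def by (rule open_vimage) (auto intro: continuous_on_diff assms(1,2))
  moreover have "x \<in> A" unfolding A_def using \<open>f x \<noteq> g x\<close> by simp
  ultimately obtain a b where ab: "box a b \<subseteq> A" "x \<in> box a b" "\<forall>i\<in>Basis. a \<bullet> i < b \<bullet> i"
    using open_contains_box by metis
  have "AE y in lborel. y \<notin> box a b" using ae by eventually_elim (use ab(1) A_def in auto)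
  hence "box a b \<in> null_sets lborel" by (subst AE_iff_null_sets) auto
  hence "emeasure lborel (box a b) = 0" by auto
  moreover have "emeasure lborel (box a b) > 0"
    using ab(3)
    by (subst emeasure_lborel_box) (auto intro!: prod_pos simp: inner_diff_left less_imp_le)
  ultimately show False by simp
qed

lemma gmm_density_eq_if_measure_eq:
  assumes "valid_gmm r0" "valid_gmm r1" "gmm_measure r0 = gmm_measure r1"
  shows "gmm_density r0 = gmm_density r1"
proof (rule continuous_AE_lborel_eq[OF continuous_on_gmm_density continuous_on_gmm_density])
  have meas: "(\<lambda>x. ennreal (gmm_density r x)) \<in> borel_measurable lborel" for r :: "'n::finite gmm"
    using continuous_on_gmm_density[of r] by (intro measurable_compose[OF _ measurable_ennreal])
      (simp add: borel_measurable_continuous_onI)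
  have "density lborel (\<lambda>x. ennreal (gmm_density r0 x))
      = density lborel (\<lambda>x. ennreal (gmm_density r1 x))"
    using assms(3) unfolding gmm_measure_def gmm_density_def .
  hence "AE x in lborel. ennreal (gmm_density r0 x) = ennreal (gmm_density r1 x)"
    using sigma_finite_measure.density_unique_iff[OF sigma_finite_lborel meas meas] by blast
  thus "AE x in lborel. gmm_density r0 x = gmm_density r1 x"
    by eventually_elim (use gmm_density_nonneg[OF assms(1)] gmm_density_nonneg[OF assms(2)] in simp)
qed

theorem gmm_measure_eq_iff_component_mass_eq:
  assumes v0: "valid_gmm r0" and v1: "valid_gmm r1"
  shows "gmm_measure r0 = gmm_measure r1 \<longleftrightarrow> gmm_component_mass r0 = gmm_component_mass r1"
proof -
  define \<Theta> where "\<Theta> = gmm_component r0 ` {..<length r0} \<union> gmm_component r1 ` {..<length r1}"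
  have fin: "finite \<Theta>" unfolding \<Theta>_def by simp
  have density_diff: "gmm_density r0 x - gmm_density r1 x
      = (\<Sum>\<theta>\<in>\<Theta>. (gmm_component_mass r0 \<theta> - gmm_component_mass r1 \<theta>) * gauss_pdf (fst \<theta>) (snd \<theta>) x)" for x
    using gmm_density_regroup[OF fin, of r0 x] gmm_density_regroup[OF fin, of r1 x]
    unfolding \<Theta>_def by (simp add: left_diff_distrib sum_subtractf)
  show ?thesis
  proof
    assume "gmm_measure r0 = gmm_measure r1"
    hence "gmm_density r0 = gmm_density r1" using gmm_density_eq_if_measure_eq v0 v1 by blast
    hence "(\<Sum>\<theta>\<in>\<Theta>. (gmm_component_mass r0 \<theta> - gmm_component_mass r1 \<theta>) * gauss_pdf (fst \<theta>) (snd \<theta>) x) = 0"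
      for x using density_diff[of x] by simp
    moreover have "spd (snd \<theta>)" if "\<theta> \<in> \<Theta>" for \<theta>
      using that valid_gmmD(2)[OF v0] valid_gmmD(2)[OF v1] unfolding \<Theta>_def gmm_component_def by auto
    ultimately have "\<forall>\<theta>\<in>\<Theta>. gmm_component_mass r0 \<theta> - gmm_component_mass r1 \<theta> = 0"
      using gaussian_densities_independent[OF fin,
          of "\<lambda>\<theta>. gmm_component_mass r0 \<theta> - gmm_component_mass r1 \<theta>"]
      by blast
    show "gmm_component_mass r0 = gmm_component_mass r1"
    proof
      fix \<theta>
      show "gmm_component_mass r0 \<theta> = gmm_component_mass r1 \<theta>"
        using \<open>\<forall>\<theta>\<in>\<Theta>. _\<close> gmm_component_mass_eq_0[of \<theta> r0] gmm_component_mass_eq_0[of \<theta> r1]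
        by (cases "\<theta> \<in> \<Theta>") (auto simp: \<Theta>_def)
    qed
  next
    assume eq: "gmm_component_mass r0 = gmm_component_mass r1"
    have "gmm_density r0 x - gmm_density r1 x = 0" for x unfolding density_diff eq by simp
    hence "gmm_density r0 = gmm_density r1" by (simp add: fun_eq_iff)
    thus "gmm_measure r0 = gmm_measure r1" unfolding gmm_measure_def gmm_density_def by metis
  qed
qed

section \<open>Zero distance\<close>

lemma gmm_component_mass_diff_le_mismatch:
  assumes "\<pi> \<in> couplings r0 r1"
  shows "\<bar>gmm_component_mass r0 \<theta> - gmm_component_mass r1 \<theta>\<bar>
    \<le> (\<Sum>i<length r0. \<Sum>j<length r1. if gmm_component r0 i \<noteq> gmm_component r1 j then \<pi> i j else 0)"
proof -
  define n0 n1 where "n0 = length r0" and "n1 = length r1"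
  note P = couplingsD[OF assms, folded n0_def n1_def]
  define \<chi>0 \<chi>1 where "\<chi>0 i = (if gmm_component r0 i = \<theta> then 1 else 0 :: real)"
    and "\<chi>1 j = (if gmm_component r1 j = \<theta> then 1 else 0 :: real)" for i j
  have "gmm_component_mass r0 \<theta> = (\<Sum>i<n0. \<Sum>j<n1. \<chi>0 i * \<pi> i j)"
    unfolding gmm_component_mass_def n0_def[symmetric] \<chi>0_def using P(2)
    by (intro sum.cong refl) (simp add: sum_distrib_left[symmetric])
  moreover have "gmm_component_mass r1 \<theta> = (\<Sum>i<n0. \<Sum>j<n1. \<chi>1 j * \<pi> i j)"
    unfolding gmm_component_mass_def n1_def[symmetric] \<chi>1_def using P(3)
    by (subst sum.swap) (intro sum.cong refl, simp add: sum_distrib_left[symmetric])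
  ultimately have "\<bar>gmm_component_mass r0 \<theta> - gmm_component_mass r1 \<theta>\<bar>
      = \<bar>\<Sum>i<n0. \<Sum>j<n1. (\<chi>0 i - \<chi>1 j) * \<pi> i j\<bar>"
    by (simp add: sum_subtractf left_diff_distrib)
  also have "\<dots> \<le> (\<Sum>i<n0. \<Sum>j<n1. \<bar>(\<chi>0 i - \<chi>1 j) * \<pi> i j\<bar>)"
    by (rule order_trans[OF sum_abs sum_mono[OF sum_abs]])
  also have "\<dots> \<le> (\<Sum>i<n0. \<Sum>j<n1. if gmm_component r0 i \<noteq> gmm_component r1 j then \<pi> i j else 0)"
    using P(1) unfolding \<chi>0_def \<chi>1_def by (intro sum_mono) (auto simp: abs_mult)
  finally show ?thesis unfolding n0_def n1_def .
qed

text \<open>\<open>c\<close> is the smallest \<open>W2sq\<close> between distinct components, positive by \<open>W2sq_eq_0_iff\<close>.\<close>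

lemma gmm_cost_ge_mismatch:
  assumes v0: "valid_gmm r0" and v1: "valid_gmm r1"
  obtains c where "c > 0" "\<And>\<pi>. \<pi> \<in> couplings r0 r1 \<Longrightarrow>
    c * (\<Sum>i<length r0. \<Sum>j<length r1. if gmm_component r0 i \<noteq> gmm_component r1 j then \<pi> i j else 0)
      \<le> gmm_cost r0 r1 \<pi>"
proof -
  define W where "W i j = W2sq (mean r0 i) (cov r0 i) (mean r1 j) (cov r1 j)" for i j
  define Bad where
    "Bad = {(i, j). i < length r0 \<and> j < length r1 \<and> gmm_component r0 i \<noteq> gmm_component r1 j}"
  have "finite Bad" unfolding Bad_def
    by (rule finite_subset[of _ "{..<length r0} \<times> {..<length r1}"]) auto
  define c where "c = Min (insert 1 ((\<lambda>(i, j). W i j) ` Bad))"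
  have W_nonneg: "W i j \<ge> 0" if "i < length r0" "j < length r1" for i j
    unfolding W_def using W2sq_components_nonneg[OF v0 v1 that] .
  have "W i j > 0" if "(i, j) \<in> Bad" for i j
    using that W_nonneg W2sq_eq_0_iff valid_gmmD(2)[OF v0] valid_gmmD(2)[OF v1]
    unfolding Bad_def W_def gmm_component_def by (fastforce simp: order_le_less)
  hence "c > 0" unfolding c_def using \<open>finite Bad\<close> by (subst Min_gr_iff) auto
  moreover have c_le: "c \<le> W i j" if "(i, j) \<in> Bad" for i j
    unfolding c_def using \<open>finite Bad\<close> that by (intro Min_le) auto
  have "c * (if gmm_component r0 i \<noteq> gmm_component r1 j then \<pi> i j else 0) \<le> W i j * \<pi> i j"
    if "\<pi> \<in> couplings r0 r1" "i < length r0" "j < length r1" for \<pi> i j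
  proof (cases "gmm_component r0 i = gmm_component r1 j")
    case False
    hence "c \<le> W i j" using c_le that(2,3) unfolding Bad_def by blast
    thus ?thesis using False couplingsD(1)[OF that] by (simp add: mult_right_mono)
  qed (simp add: W_nonneg[OF that(2,3)] couplingsD(1)[OF that])
  hence "c * (\<Sum>i<length r0. \<Sum>j<length r1. if gmm_component r0 i \<noteq> gmm_component r1 j then \<pi> i j else 0)
      \<le> gmm_cost r0 r1 \<pi>" if "\<pi> \<in> couplings r0 r1" for \<pi>
    unfolding gmm_cost_def W_def[symmetric] sum_distrib_left using that by (intro sum_mono) auto
  with \<open>c > 0\<close> show ?thesis using that by blast
qed

lemma gmm_dist_eq_0_imp_component_mass_eq:
  assumes v0: "valid_gmm r0" and v1: "valid_gmm r1" and "gmm_dist r0 r1 = 0"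
  shows "gmm_component_mass r0 = gmm_component_mass r1"
proof
  fix \<theta>
  obtain c where "c > 0" and c: "\<And>\<pi>. \<pi> \<in> couplings r0 r1 \<Longrightarrow>
    c * (\<Sum>i<length r0. \<Sum>j<length r1. if gmm_component r0 i \<noteq> gmm_component r1 j then \<pi> i j else 0)
      \<le> gmm_cost r0 r1 \<pi>"
    using gmm_cost_ge_mismatch[OF v0 v1] by blast
  have "c * \<bar>gmm_component_mass r0 \<theta> - gmm_component_mass r1 \<theta>\<bar> \<le> gmm_cost r0 r1 \<pi>"
    if "\<pi> \<in> couplings r0 r1" for \<pi>
    using mult_left_mono[OF gmm_component_mass_diff_le_mismatch[OF that, of \<theta>] less_imp_le[OF \<open>c > 0\<close>]]
      c[OF that]
    by linarith
  hence "c * \<bar>gmm_component_mass r0 \<theta> - gmm_component_mass r1 \<theta>\<bar>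
      \<le> Inf (gmm_cost r0 r1 ` couplings r0 r1)"
    by (rule le_Inf_gmm_cost[OF v0 v1])
  also have "Inf (gmm_cost r0 r1 ` couplings r0 r1) = 0" using assms(3) unfolding gmm_dist_def by simp
  finally show "gmm_component_mass r0 \<theta> = gmm_component_mass r1 \<theta>"
    using \<open>c > 0\<close> by (simp add: mult_le_0_iff)
qed

text \<open>If the common mass of a Gaussian is \<open>0\<close>, all weights on it vanish, so the junk value
  \<open>x / 0 = 0\<close> is harmless.\<close>

definition matching_coupling :: "('n::finite) gmm \<Rightarrow> ('n::finite) gmm \<Rightarrow> nat \<Rightarrow> nat \<Rightarrow> real" where
  "matching_coupling r0 r1 i j = (if gmm_component r0 i = gmm_component r1 j
     then wt r0 i * wt r1 j / gmm_component_mass r0 (gmm_component r0 i) else 0)"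

lemma matching_coupling_in_couplings:
  assumes v0: "valid_gmm r0" and v1: "valid_gmm r1"
    and eq: "gmm_component_mass r0 = gmm_component_mass r1"
  shows "matching_coupling r0 r1 \<in> couplings r0 r1"
  unfolding couplings_def
proof (intro CollectI conjI allI impI)
  fix i j assume "i < length r0" "j < length r1"
  thus "matching_coupling r0 r1 i j \<ge> 0"
    unfolding matching_coupling_def
    using valid_gmmD(1)[OF v0] valid_gmmD(1)[OF v1] gmm_component_mass_nonneg[OF v0] by auto
next
  fix i assume i: "i < length r0"
  let ?M = "gmm_component_mass r0 (gmm_component r0 i)"
  have "(\<Sum>j<length r1. matching_coupling r0 r1 i j)
      = (\<Sum>j<length r1. if gmm_component r1 j = gmm_component r0 i then wt r1 j * (wt r0 i / ?M) else 0)"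
    unfolding matching_coupling_def by (intro sum.cong) auto
  also have "\<dots> = ?M * (wt r0 i / ?M)" unfolding sum_if_gmm_component eq ..
  also have "\<dots> = wt r0 i" using wt_le_gmm_component_mass[OF v0 i] valid_gmmD(1)[OF v0 i] by auto
  finally show "(\<Sum>j<length r1. matching_coupling r0 r1 i j) = wt r0 i" .
next
  fix j assume j: "j < length r1"
  let ?M = "gmm_component_mass r0 (gmm_component r1 j)"
  have "(\<Sum>i<length r0. matching_coupling r0 r1 i j)
      = (\<Sum>i<length r0. if gmm_component r0 i = gmm_component r1 j then wt r0 i * (wt r1 j / ?M) else 0)"
    unfolding matching_coupling_def by (intro sum.cong) auto
  also have "\<dots> = ?M * (wt r1 j / ?M)" unfolding sum_if_gmm_component ..
  also have "\<dots> = wt r1 j"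
    using wt_le_gmm_component_mass[OF v1 j] valid_gmmD(1)[OF v1 j] unfolding eq by auto
  finally show "(\<Sum>i<length r0. matching_coupling r0 r1 i j) = wt r1 j" .
qed

lemma gmm_cost_matching_coupling:
  assumes "valid_gmm r0" "valid_gmm r1"
  shows "gmm_cost r0 r1 (matching_coupling r0 r1) = 0"
  unfolding gmm_cost_def
proof (intro sum.neutral ballI)
  fix i j assume "i \<in> {..<length r0}" "j \<in> {..<length r1}"
  hence "spd (cov r0 i)" "spd (cov r1 j)" using valid_gmmD(2) assms by auto
  thus "W2sq (mean r0 i) (cov r0 i) (mean r1 j) (cov r1 j) * matching_coupling r0 r1 i j = 0"
    unfolding matching_coupling_def gmm_component_def by (simp add: W2sq_eq_0_iff)
qed

lemma gmm_dist_eq_0_iff_component_mass_eq: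
  assumes v0: "valid_gmm r0" and v1: "valid_gmm r1"
  shows "gmm_dist r0 r1 = 0 \<longleftrightarrow> gmm_component_mass r0 = gmm_component_mass r1"
proof
  assume "gmm_component_mass r0 = gmm_component_mass r1"
  hence "Inf (gmm_cost r0 r1 ` couplings r0 r1) \<le> 0"
    using gmm_cost_Inf_le[OF v0 v1 matching_coupling_in_couplings[OF v0 v1]]
      gmm_cost_matching_coupling[OF v0 v1]
    by simp
  thus "gmm_dist r0 r1 = 0" unfolding gmm_dist_def using gmm_cost_Inf_nonneg[OF v0 v1] by simp
qed (rule gmm_dist_eq_0_imp_component_mass_eq[OF v0 v1])

theorem theorem1:
  fixes r0 r1 r2 :: "('n::finite) gmm"
  assumes "valid_gmm r0" and "valid_gmm r1" and "valid_gmm r2"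
  shows "gmm_dist r0 r1 \<ge> 0
         \<and> (gmm_dist r0 r1 = 0 \<longleftrightarrow> gmm_measure r0 = gmm_measure r1)
         \<and> gmm_dist r0 r1 = gmm_dist r1 r0
         \<and> gmm_dist r0 r2 \<le> gmm_dist r0 r1 + gmm_dist r1 r2"
  using gmm_dist_nonneg[OF assms(1,2)]
    gmm_dist_eq_0_iff_component_mass_eq[OF assms(1,2)]
    gmm_measure_eq_iff_component_mass_eq[OF assms(1,2)]
    gmm_dist_commute[OF assms(1,2)] gmm_dist_triangle[OF assms]
  by simp

end
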